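(* There exists a stably correct CRN protocol $\Pi=(\mathcal{S},\mathcal{R})$ such that $\operatorname{RT}_{\mathrm{stab}}^{\Pi}(n)=O(\log n)$, but if the minimum in the definition of $\operatorname{RT}_{\mathrm{stab}}^{\Pi}(n)$ is restricted to runtime policies $\varrho$ with $\varrho(\mathbf{c})\subseteq\mathcal{E}(\mathbf{c})$ for every configuration $\mathbf{c}$, then the resulting quantity is $\Omega(n)$.
   Context: $\mathcal{E}(\mathbf{c})$ denotes the set of reactions that escape from the strongly connected component of $\mathbf{c}$ in the configuration digraph $D^{\Pi}$ (which has an $\alpha$-labeled edge $\mathbf{c}\to\alpha(\mathbf{c})$ for each configuration $\mathbf{c}$ and each $\alpha\in\operatorname{app}(\mathbf{c})$); a reaction $\alpha$ escapes from a component $S$ if $\alpha\in\operatorname{app}(\mathbf{c})$ and $\alpha(\mathbf{c})\notin S$ for all $\mathbf{c}\in S$. CRN model: $\Pi=(\mathcal{S},\mathcal{R})$, finite species set, finite reaction set $\mathcal{R}\subset\mathbb{N}^{\mathcal{S}}\times\mathbb{N}^{\mathcal{S}}$; reactions $(\mathbf{r},\mathbf{p})$ with $\|\mathbf{r}\|_1\in\{1,2\}$, $\|\mathbf{r}\|_1\le\|\mathbf{p}\|_1$; every $\mathbf{r}$ with $1\le\|\mathbf{r}\|_1\le2$ has a nonempty set $\mathcal{R}(\mathbf{r})$ of reactions; void reactions ($\mathbf{r}=\mathbf{p}$) alone in their $\mathcal{R}(\mathbf{r})$; $\operatorname{NV}(\mathcal{R})$ non-void; finite density. Configurations $\mathbf{c}\in\mathbb{N}^{\mathcal{S}}$,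 $\|\mathbf{c}\|_1\ge1$; applicability $\mathbf{r}\le\mathbf{c}$, result $\alpha(\mathbf{c})=\mathbf{c}-\mathbf{r}+\mathbf{p}$; $\operatorname{app}(\mathbf{c})$; reachability $\stackrel{*}{\rightharpoonup}$; $\mathrm{stab}(Z)=\{\mathbf{c}\in Z:\mathbf{c}\stackrel{*}{\rightharpoonup}\mathbf{c}'\Rightarrow\mathbf{c}'\in Z\}$. Weakly fair executions $\langle\mathbf{c}^t,\alpha^t\rangle$: every reaction applicable at step $t$ is later scheduled or becomes inapplicable. Correctness is w.r.t. an interface $\mathcal{I}=(\mathcal{U},\mu,\mathcal{C})$ giving target sets $Z_{\mathcal{I}}(\mathbf{c}^0)=\{\mathbf{c}:(\mu(\mathbf{c}^0),\mu(\mathbf{c}))\in\mathcal{C}\}$ and valid initial configurations (those with $Z_{\mathcal{I}}(\mathbf{c}^0)\ne\emptyset$); stably correct: every weakly fair valid execution reaches $\mathrm{stab}(Z_{\mathcal{I}}(\mathbf{c}^0))$, first such step = stabilization step. Runtime: stochastic scheduler with volume $\varphi=\Theta(n)$, $n=\|\mathbf{c}^0\|_1$; propensity $\pi_{\mathbf{c}}(\alpha)=\mathbf{c}(A)/|\mathcal{R}(\mathbf{r})|$ ($\mathbf{r}=A$), $\frac1\varphi\binom{\mathbf{c}(A)}2/|\mathcal{R}(\mathbf{r})|$ ($\mathbf{r}=2A$), $\frac1\varphi\mathbf{c}(A)\mathbf{c}(B)/|\mathcal{R}(\mathbf{r})|$ ($\mathbf{r}=A+B$); step time span $1/\pi_{\mathbf{c}}(\mathcal{R})$.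 $\tau(\eta,t,Q)$ = least $s>t$ with $\alpha^{s-1}\in Q$ or every reaction of $Q$ inapplicable at some step in $[t,s]$. Runtime policy $\varrho(\mathbf{c})\subseteq\operatorname{NV}(\mathcal{R})$; skipping policy $\sigma(t)\ge t$; rounds $t(0)=0$, $t_e(i)=\sigma(t(i))$, $\mathbf{e}^i=\mathbf{c}^{t_e(i)}$, $t(i+1)=\tau(\eta,t_e(i),\varrho(\mathbf{e}^i))$; $\operatorname{TC}^{\varrho}(\mathbf{c})$ = expected total time span of the steps before $\tau(\eta_r,0,\varrho(\mathbf{c}))$ of a stochastic execution from $\mathbf{c}$; $\operatorname{RT}_{\mathrm{stab}}^{\varrho,\sigma}(\eta)=\sum_{i<i^*}\operatorname{TC}^{\varrho}(\mathbf{e}^i)$, $i^*=\min\{i:t(i)\ge t^*\}$; $\operatorname{RT}_{\mathrm{stab}}^{\Pi}(n)=\min_\varrho\max_{\eta,\sigma}\operatorname{RT}_{\mathrm{stab}}^{\varrho,\sigma}(\eta)$, max over weakly fair valid executions with initial molecular count $n$ and all skipping policies. *)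

theory Defs
  imports "HOL-Analysis.Analysis" "HOL-Library.Extended_Nat" "HOL-Library.Extended_Nonnegative_Real"
begin

text \<open>Species are natural numbers; a CRN is a finite species set S :: nat set together
with a finite reaction set R.  Vectors in N^S are functions nat => nat vanishing outside S.\<close>

type_synonym conf = "nat \<Rightarrow> nat"
type_synonym rxn = "conf \<times> conf"
type_synonym iface = "conf set \<times> (conf \<Rightarrow> conf) \<times> (conf \<times> conf) set"

definition supp_in :: "nat set \<Rightarrow> conf \<Rightarrow> bool" where
  "supp_in S c \<longleftrightarrow> (\<forall>s. s \<notin> S \<longrightarrow> c s = 0)"

definition norm1 :: "nat set \<Rightarrow> conf \<Rightarrow> nat" where
  "norm1 S c = (\<Sum>s\<in>S. c s)"

definition is_config :: "nat set \<Rightarrow> conf \<Rightarrow> bool" where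
  "is_config S c \<longleftrightarrow> supp_in S c \<and> norm1 S c \<ge> 1"

definition Rr :: "rxn set \<Rightarrow> conf \<Rightarrow> rxn set" where
  "Rr R r = {\<alpha> \<in> R. fst \<alpha> = r}"

definition NV :: "rxn set \<Rightarrow> rxn set" where
  "NV R = {\<alpha> \<in> R. fst \<alpha> \<noteq> snd \<alpha>}"

definition app :: "rxn set \<Rightarrow> conf \<Rightarrow> rxn set" where
  "app R c = {\<alpha> \<in> R. fst \<alpha> \<le> c}"

definition apply_rxn :: "rxn \<Rightarrow> conf \<Rightarrow> conf" where
  "apply_rxn \<alpha> c = (\<lambda>s. c s - fst \<alpha> s + snd \<alpha> s)"

definition step :: "rxn set \<Rightarrow> conf \<Rightarrow> conf \<Rightarrow> bool" where
  "step R c c' \<longleftrightarrow> (\<exists>\<alpha> \<in> app R c. c' = apply_rxn \<alpha> c)"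

definition reach :: "rxn set \<Rightarrow> conf \<Rightarrow> conf \<Rightarrow> bool" where
  "reach R = (step R)\<^sup>*\<^sup>*"

definition finite_density :: "nat set \<Rightarrow> rxn set \<Rightarrow> bool" where
  "finite_density S R \<longleftrightarrow> (\<exists>d::nat. \<forall>c c'. is_config S c \<and> reach R c c' \<longrightarrow> norm1 S c' \<le> d * norm1 S c)"

definition crn :: "nat set \<Rightarrow> rxn set \<Rightarrow> bool" where
  "crn S R \<longleftrightarrow> finite S \<and> finite R
    \<and> (\<forall>(r, p) \<in> R. supp_in S r \<and> supp_in S p \<and> norm1 S r \<in> {1, 2} \<and> norm1 S r \<le> norm1 S p)
    \<and> (\<forall>r. supp_in S r \<and> 1 \<le> norm1 S r \<and> norm1 S r \<le> 2 \<longrightarrow> Rr R r \<noteq> {})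
    \<and> (\<forall>r. (r, r) \<in> R \<longrightarrow> Rr R r = {(r, r)})
    \<and> finite_density S R"

definition scc :: "nat set \<Rightarrow> rxn set \<Rightarrow> conf \<Rightarrow> conf set" where
  "scc S R c = {c'. is_config S c' \<and> reach R c c' \<and> reach R c' c}"

definition escapes :: "rxn set \<Rightarrow> rxn \<Rightarrow> conf set \<Rightarrow> bool" where
  "escapes R \<alpha> Z \<longleftrightarrow> (\<forall>c \<in> Z. \<alpha> \<in> app R c \<and> apply_rxn \<alpha> c \<notin> Z)"

definition escaping :: "nat set \<Rightarrow> rxn set \<Rightarrow> conf \<Rightarrow> rxn set" where
  "escaping S R c = {\<alpha> \<in> R. escapes R \<alpha> (scc S R c)}"

definition is_exec :: "nat set \<Rightarrow> rxn set \<Rightarrow> (nat \<Rightarrow> conf) \<Rightarrow> (nat \<Rightarrow> rxn) \<Rightarrow> bool" where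
  "is_exec S R cs as \<longleftrightarrow> (\<forall>t. is_config S (cs t) \<and> as t \<in> app R (cs t) \<and> cs (Suc t) = apply_rxn (as t) (cs t))"

definition weakly_fair :: "rxn set \<Rightarrow> (nat \<Rightarrow> conf) \<Rightarrow> (nat \<Rightarrow> rxn) \<Rightarrow> bool" where
  "weakly_fair R cs as \<longleftrightarrow> (\<forall>t. \<forall>\<alpha> \<in> app R (cs t). \<exists>s \<ge> t. as s = \<alpha> \<or> \<alpha> \<notin> app R (cs s))"

definition interface :: "nat set \<Rightarrow> iface \<Rightarrow> bool" where
  "interface S I = (case I of (U, \<mu>, C) \<Rightarrow> (\<forall>c. is_config S c \<longrightarrow> \<mu> c \<in> U) \<and> C \<subseteq> U \<times> U)"

definition Z_I :: "nat set \<Rightarrow> iface \<Rightarrow> conf \<Rightarrow> conf set" where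
  "Z_I S I c0 = (case I of (U, \<mu>, C) \<Rightarrow> {c. is_config S c \<and> (\<mu> c0, \<mu> c) \<in> C})"

definition valid_init :: "nat set \<Rightarrow> iface \<Rightarrow> conf \<Rightarrow> bool" where
  "valid_init S I c0 \<longleftrightarrow> is_config S c0 \<and> Z_I S I c0 \<noteq> {}"

definition stab :: "rxn set \<Rightarrow> conf set \<Rightarrow> conf set" where
  "stab R Z = {c \<in> Z. \<forall>c'. reach R c c' \<longrightarrow> c' \<in> Z}"

definition stably_correct :: "nat set \<Rightarrow> rxn set \<Rightarrow> iface \<Rightarrow> bool" where
  "stably_correct S R I \<longleftrightarrow> (\<forall>cs as. is_exec S R cs as \<and> weakly_fair R cs as \<and> valid_init S I (cs 0)
      \<longrightarrow> (\<exists>t. cs t \<in> stab R (Z_I S I (cs 0))))"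

definition stab_step :: "nat set \<Rightarrow> rxn set \<Rightarrow> iface \<Rightarrow> (nat \<Rightarrow> conf) \<Rightarrow> nat" where
  "stab_step S R I cs = (LEAST t. cs t \<in> stab R (Z_I S I (cs 0)))"

definition unitv :: "nat \<Rightarrow> conf" where
  "unitv A = (\<lambda>s. if s = A then 1 else 0)"

definition propensity :: "rxn set \<Rightarrow> real \<Rightarrow> conf \<Rightarrow> rxn \<Rightarrow> real" where
  "propensity R vol c \<alpha> =
     (let r = fst \<alpha>; k = real (card (Rr R r)) in
      if (\<exists>A. r = unitv A) then real (c (SOME A. r = unitv A)) / k
      else if (\<exists>A. r = (\<lambda>s. 2 * unitv A s)) then
        (1 / vol) * real (c (SOME A. r = (\<lambda>s. 2 * unitv A s)) choose 2) / k
      else if (\<exists>A B. A \<noteq> B \<and> r = (\<lambda>s. unitv A s + unitv B s)) then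
        (let AB = (SOME AB. fst AB \<noteq> snd AB \<and> r = (\<lambda>s. unitv (fst AB) s + unitv (snd AB) s))
         in (1 / vol) * real (c (fst AB)) * real (c (snd AB)) / k)
      else 0)"

definition prop_tot :: "rxn set \<Rightarrow> real \<Rightarrow> conf \<Rightarrow> real" where
  "prop_tot R vol c = (\<Sum>\<alpha>\<in>R. propensity R vol c \<alpha>)"

definition tau_hit :: "rxn set \<Rightarrow> rxn set \<Rightarrow> (nat \<Rightarrow> conf) \<Rightarrow> (nat \<Rightarrow> rxn) \<Rightarrow> nat \<Rightarrow> nat \<Rightarrow> bool" where
  "tau_hit R Q cs as t s \<longleftrightarrow> as (s - 1) \<in> Q \<or> (\<exists>u. t \<le> u \<and> u \<le> s \<and> (\<forall>\<beta>\<in>Q. \<beta> \<notin> app R (cs u)))"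

definition tau :: "rxn set \<Rightarrow> rxn set \<Rightarrow> (nat \<Rightarrow> conf) \<Rightarrow> (nat \<Rightarrow> rxn) \<Rightarrow> nat \<Rightarrow> enat" where
  "tau R Q cs as t = (if \<exists>s > t. tau_hit R Q cs as t s
      then enat (LEAST s. s > t \<and> tau_hit R Q cs as t s) else \<infinity>)"

text \<open>Stochastic execution from c: a finite prefix is a list of reactions; its configurations
and probability.\<close>
definition path_conf :: "conf \<Rightarrow> rxn list \<Rightarrow> nat \<Rightarrow> conf" where
  "path_conf c \<alpha>s i = foldl (\<lambda>d a. apply_rxn a d) c (take i \<alpha>s)"

definition path_prob :: "rxn set \<Rightarrow> real \<Rightarrow> conf \<Rightarrow> rxn list \<Rightarrow> real" where
  "path_prob R vol c \<alpha>s =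
     (\<Prod>i<length \<alpha>s. propensity R vol (path_conf c \<alpha>s i) (\<alpha>s ! i) / prop_tot R vol (path_conf c \<alpha>s i))"

text \<open>TC: expected total time span of the steps k with k < tau(eta_r, 0, Q), i.e. the sum over k
of the expected time span of step k on the event that tau has not occurred up to step k.\<close>
definition TC :: "rxn set \<Rightarrow> real \<Rightarrow> rxn set \<Rightarrow> conf \<Rightarrow> ennreal" where
  "TC R vol Q c = (\<Sum>k. \<Sum>\<alpha>s \<in> {\<alpha>s. set \<alpha>s \<subseteq> R \<and> length \<alpha>s = k}.
      (if (\<forall>s. 0 < s \<and> s \<le> k \<longrightarrow> \<not> tau_hit R Q (path_conf c \<alpha>s) (\<lambda>i. \<alpha>s ! i) 0 s)
       then ennreal (path_prob R vol c \<alpha>s * (1 / prop_tot R vol (path_conf c \<alpha>s k)))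
       else 0))"

primrec round_t :: "rxn set \<Rightarrow> (conf \<Rightarrow> rxn set) \<Rightarrow> (nat \<Rightarrow> nat) \<Rightarrow> (nat \<Rightarrow> conf) \<Rightarrow> (nat \<Rightarrow> rxn) \<Rightarrow> nat \<Rightarrow> enat" where
  "round_t R \<rho> \<sigma> cs as 0 = 0"
| "round_t R \<rho> \<sigma> cs as (Suc i) =
     (case round_t R \<rho> \<sigma> cs as i of
        enat t \<Rightarrow> tau R (\<rho> (cs (\<sigma> t))) cs as (\<sigma> t)
      | \<infinity> \<Rightarrow> \<infinity>)"

definition RT_exec :: "nat set \<Rightarrow> rxn set \<Rightarrow> iface \<Rightarrow> (nat \<Rightarrow> real) \<Rightarrow> (conf \<Rightarrow> rxn set) \<Rightarrow> (nat \<Rightarrow> nat)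
     \<Rightarrow> (nat \<Rightarrow> conf) \<Rightarrow> (nat \<Rightarrow> rxn) \<Rightarrow> ennreal" where
  "RT_exec S R I \<phi> \<rho> \<sigma> cs as =
     (let vol = \<phi> (norm1 S (cs 0));
          tstar = stab_step S R I cs;
          istar = (LEAST i. enat tstar \<le> round_t R \<rho> \<sigma> cs as i)
      in \<Sum>i<istar. (let e = cs (\<sigma> (the_enat (round_t R \<rho> \<sigma> cs as i))) in TC R vol (\<rho> e) e))"

definition runtime_policy :: "nat set \<Rightarrow> rxn set \<Rightarrow> (conf \<Rightarrow> rxn set) \<Rightarrow> bool" where
  "runtime_policy S R \<rho> \<longleftrightarrow> (\<forall>c. is_config S c \<longrightarrow> \<rho> c \<subseteq> NV R)"

definition skipping_policy :: "(nat \<Rightarrow> nat) \<Rightarrow> bool" where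
  "skipping_policy \<sigma> \<longleftrightarrow> (\<forall>t. t \<le> \<sigma> t)"

definition RT_stab :: "nat set \<Rightarrow> rxn set \<Rightarrow> iface \<Rightarrow> (nat \<Rightarrow> real) \<Rightarrow> ((conf \<Rightarrow> rxn set) \<Rightarrow> bool) \<Rightarrow> nat \<Rightarrow> ennreal" where
  "RT_stab S R I \<phi> P n =
     (INF \<rho> \<in> {\<rho>. runtime_policy S R \<rho> \<and> P \<rho>}.
        SUP x \<in> {(cs, as, \<sigma>). is_exec S R cs as \<and> weakly_fair R cs as \<and> valid_init S I (cs 0)
                  \<and> norm1 S (cs 0) = n \<and> skipping_policy \<sigma>}.
          (case x of (cs, as, \<sigma>) \<Rightarrow> RT_exec S R I \<phi> \<rho> \<sigma> cs as))"

definition volume_fun :: "(nat \<Rightarrow> real) \<Rightarrow> bool" where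
  "volume_fun \<phi> \<longleftrightarrow> (\<exists>a b. 0 < a \<and> (\<forall>n \<ge> 1. a * real n \<le> \<phi> n \<and> \<phi> n \<le> b * real n))"

end

theory Submission
  imports Defs
begin

text \<open>The protocol has an inert species, present in n - 3 copies, two copies of a species X,
a token that flips between the states A and B, and the output species Z. Apart from A \<rightarrow> B,
B \<rightarrow> A, A \<rightarrow> Z, B \<rightarrow> Z and 2X \<rightarrow> 2Z all reactions are void, and a valid execution is
stable as soon as a Z is present.

With the policy {A \<rightarrow> Z, B \<rightarrow> Z, 2X \<rightarrow> 2Z} the first round does not end before stabilisation,
and it takes O(1) expected time because a unimolecular reaction of the policy is always applicable.

The two token configurations form a strongly connected component from which only 2X \<rightarrow> 2Z
escapes, since A \<rightarrow> Z is not applicable in the B configuration and vice versa. Its propensity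
is at most 1/\<phi>(n), so a policy restricted to escaping reactions either waits for 2X \<rightarrow> 2Z at
one of the two configurations, which takes expected time \<Omega>(n), or selects nothing there. In
the latter case an adversary flips the token for as many rounds as it likes, each of which
costs the expected duration of a single step, so the runtime is unbounded.\<close>

definition unitv2 :: "nat \<Rightarrow> conf" where
  "unitv2 a = (\<lambda>s. 2 * unitv a s)"

lemma unitv_eq_iff [simp]: "unitv a = unitv b \<longleftrightarrow> a = b"
  by (auto simp: unitv_def fun_eq_iff split: if_splits)

lemma unitv2_eq_iff [simp]: "unitv2 a = unitv2 b \<longleftrightarrow> a = b"
  by (auto simp: unitv2_def unitv_def fun_eq_iff split: if_splits)

lemma unitv_neq_unitv2 [simp]: "unitv a \<noteq> unitv2 b" "unitv2 b \<noteq> unitv a"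
  by (auto simp: unitv2_def unitv_def fun_eq_iff split: if_splits)

lemma unitv_le_iff: "unitv a \<le> d \<longleftrightarrow> 1 \<le> d a"
  by (auto simp: le_fun_def unitv_def)

lemma unitv2_le_iff: "unitv2 a \<le> d \<longleftrightarrow> 2 \<le> d a"
  by (auto simp: le_fun_def unitv_def unitv2_def)

lemma supp_in_unitv: "a \<in> S \<Longrightarrow> supp_in S (unitv a)"
  by (auto simp: supp_in_def unitv_def)

lemma supp_in_unitv2: "a \<in> S \<Longrightarrow> supp_in S (unitv2 a)"
  by (auto simp: supp_in_def unitv_def unitv2_def)

lemma norm1_unitv: "finite S \<Longrightarrow> a \<in> S \<Longrightarrow> norm1 S (unitv a) = 1"
  by (simp add: norm1_def unitv_def)

lemma norm1_unitv2: "finite S \<Longrightarrow> a \<in> S \<Longrightarrow> norm1 S (unitv2 a) = 2"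
  by (simp add: norm1_def unitv_def unitv2_def flip: sum_distrib_left)

lemma member_le_norm1: "finite S \<Longrightarrow> s \<in> S \<Longrightarrow> c s \<le> norm1 S c"
  unfolding norm1_def by (rule member_le_sum) auto

lemma finite_bounded_vectors:
  assumes "finite S"
  shows "finite {r. supp_in S r \<and> norm1 S r \<le> k}"
proof (rule finite_subset)
  show "{r. supp_in S r \<and> norm1 S r \<le> k} \<subseteq> {r. \<forall>s. (s \<in> S \<longrightarrow> r s \<in> {..k}) \<and> (s \<notin> S \<longrightarrow> r s = 0)}"
    using member_le_norm1[OF assms] by (fastforce simp: supp_in_def intro: order.trans)
  show "finite {r. \<forall>s. (s \<in> S \<longrightarrow> r s \<in> {..k}) \<and> (s \<notin> S \<longrightarrow> r s = 0)}"
    using assms by (intro finite_set_of_finite_funs) auto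
qed

lemma apply_rxn_void: "r \<le> d \<Longrightarrow> apply_rxn (r, r) d = d"
  by (auto simp: apply_rxn_def le_fun_def fun_eq_iff)

lemma apply_rxn_mass_preserving:
  assumes "finite S" "supp_in S c" "supp_in S r" "supp_in S p" "norm1 S r = norm1 S p" "r \<le> c"
  shows "supp_in S (apply_rxn (r, p) c) \<and> norm1 S (apply_rxn (r, p) c) = norm1 S c"
proof
  show "supp_in S (apply_rxn (r, p) c)"
    using assms(2,4) by (auto simp: supp_in_def apply_rxn_def)
  have rc: "\<And>s. r s \<le> c s" using assms(6) by (auto simp: le_fun_def)
  have "norm1 S (apply_rxn (r, p) c) = (\<Sum>s\<in>S. c s - r s) + norm1 S p"
    by (simp add: norm1_def apply_rxn_def sum.distrib)
  also have "(\<Sum>s\<in>S. c s - r s) = norm1 S c - norm1 S r"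
    unfolding norm1_def by (rule sum_subtractf_nat) (use rc in auto)
  also have "norm1 S r \<le> norm1 S c"
    unfolding norm1_def by (rule sum_mono) (use rc in auto)
  ultimately show "norm1 S (apply_rxn (r, p) c) = norm1 S c" using assms(5) by simp
qed

lemma propensity_nonneg: "0 \<le> vol \<Longrightarrow> 0 \<le> propensity R vol d \<alpha>"
  unfolding propensity_def Let_def by (auto intro!: divide_nonneg_nonneg mult_nonneg_nonneg)

lemma prop_tot_nonneg: "0 \<le> vol \<Longrightarrow> 0 \<le> prop_tot R vol d"
  unfolding prop_tot_def by (auto intro!: sum_nonneg propensity_nonneg)

lemma propensity_le_prop_tot: "finite R \<Longrightarrow> 0 \<le> vol \<Longrightarrow> \<alpha> \<in> R \<Longrightarrow> propensity R vol d \<alpha> \<le> prop_tot R vol d"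
  unfolding prop_tot_def by (rule member_le_sum) (auto intro: propensity_nonneg)

lemma path_prob_nonneg: "0 \<le> vol \<Longrightarrow> 0 \<le> path_prob R vol c xs"
  unfolding path_prob_def by (auto intro!: prod_nonneg divide_nonneg_nonneg propensity_nonneg prop_tot_nonneg)

lemma applicable_if_propensity_nonzero:
  assumes "propensity R vol d \<alpha> \<noteq> 0"
  shows "fst \<alpha> \<le> d"
proof -
  let ?r = "fst \<alpha>"
  consider (unit) "\<exists>A. ?r = unitv A"
    | (double) "\<exists>A. ?r = (\<lambda>s. 2 * unitv A s)" "\<nexists>A. ?r = unitv A"
    | (pair) "\<exists>A B. A \<noteq> B \<and> ?r = (\<lambda>s. unitv A s + unitv B s)"
        "\<nexists>A. ?r = unitv A" "\<nexists>A. ?r = (\<lambda>s. 2 * unitv A s)"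
    | (other) "\<nexists>A. ?r = unitv A" "\<nexists>A. ?r = (\<lambda>s. 2 * unitv A s)"
        "\<nexists>A B. A \<noteq> B \<and> ?r = (\<lambda>s. unitv A s + unitv B s)"
    by blast
  then show ?thesis
  proof cases
    case unit
    define A where "A = (SOME A. ?r = unitv A)"
    have rA: "?r = unitv A" unfolding A_def using someI_ex[OF unit] .
    have "d A \<noteq> 0" using assms unit unfolding propensity_def Let_def A_def by auto
    then show ?thesis using rA by (auto simp: le_fun_def unitv_def)
  next
    case double
    define A where "A = (SOME A. ?r = (\<lambda>s. 2 * unitv A s))"
    have rA: "?r = (\<lambda>s. 2 * unitv A s)" unfolding A_def using someI_ex[OF double(1)] .
    have "d A choose 2 \<noteq> 0" using assms double unfolding propensity_def Let_def A_def by auto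
    then have "2 \<le> d A" by (metis zero_less_binomial_iff not_less not_gr0)
    then show ?thesis using rA by (auto simp: le_fun_def unitv_def)
  next
    case pair
    then have ex: "\<exists>AB. fst AB \<noteq> snd AB \<and> ?r = (\<lambda>s. unitv (fst AB) s + unitv (snd AB) s)" by auto
    define AB where "AB = (SOME AB. fst AB \<noteq> snd AB \<and> ?r = (\<lambda>s. unitv (fst AB) s + unitv (snd AB) s))"
    have rAB: "fst AB \<noteq> snd AB \<and> ?r = (\<lambda>s. unitv (fst AB) s + unitv (snd AB) s)"
      unfolding AB_def using someI_ex[OF ex] .
    have "d (fst AB) \<noteq> 0 \<and> d (snd AB) \<noteq> 0" using assms pair unfolding propensity_def Let_def AB_def by auto
    moreover obtain A B where "AB = (A, B)" by (cases AB)
    ultimately show ?thesis using rAB by (auto simp: le_fun_def unitv_def)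
  next
    case other
    then have "propensity R vol d \<alpha> = 0" unfolding propensity_def Let_def by auto
    with assms show ?thesis by simp
  qed
qed

lemma propensity_unitv: "propensity R vol d (unitv A, p) = real (d A) / real (card (Rr R (unitv A)))"
  by (simp add: propensity_def Let_def)

lemma propensity_unitv2: "propensity R vol d (unitv2 A, p) = (1 / vol) * real (d A choose 2) / real (card (Rr R (unitv2 A)))"
proof -
  have "\<nexists>A'. unitv2 A = unitv A'" by simp
  moreover have "\<exists>A'. unitv2 A = (\<lambda>s. 2 * unitv A' s)" by (auto simp: unitv2_def)
  moreover have "(SOME A'. unitv2 A = (\<lambda>s. 2 * unitv A' s)) = A"
    by (rule some_equality) (auto simp: unitv2_def[symmetric])
  ultimately show ?thesis unfolding propensity_def Let_def fst_conv by simp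
qed

lemma card_Rr_bounds:
  assumes "finite R" "\<alpha> \<in> R"
  shows "1 \<le> card (Rr R (fst \<alpha>))" "card (Rr R (fst \<alpha>)) \<le> card R"
proof -
  have sub: "Rr R (fst \<alpha>) \<subseteq> R" by (auto simp: Rr_def)
  have "\<alpha> \<in> Rr R (fst \<alpha>)" using assms(2) by (simp add: Rr_def)
  then show "1 \<le> card (Rr R (fst \<alpha>))" using finite_subset[OF sub assms(1)] by (auto simp: Suc_le_eq card_gt_0_iff)
  show "card (Rr R (fst \<alpha>)) \<le> card R" by (rule card_mono[OF assms(1) sub])
qed

lemma propensity_unitv_ge:
  assumes "finite R" "(unitv A, p) \<in> R" "1 \<le> d A"
  shows "1 / real (card R) \<le> propensity R vol d (unitv A, p)"
proof -
  note card = card_Rr_bounds[OF assms(1,2), simplified]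
  have "1 / real (card R) \<le> 1 / real (card (Rr R (unitv A)))"
    using card by (simp add: frac_le)
  also have "\<dots> \<le> real (d A) / real (card (Rr R (unitv A)))"
    using assms(3) by (simp add: divide_right_mono)
  finally show ?thesis by (simp add: propensity_unitv)
qed

lemma prop_tot_ge:
  assumes "crn S R" "is_config S d" "0 \<le> vol"
  shows "1 / real (card R) \<le> prop_tot R vol d"
proof -
  have "norm1 S d \<noteq> 0" using assms(2) by (simp add: is_config_def)
  then obtain s where s: "s \<in> S" "d s \<noteq> 0" unfolding norm1_def by (meson sum.neutral)
  have "finite S" "finite R" using assms(1) by (auto simp: crn_def)
  then have "Rr R (unitv s) \<noteq> {}"
    using assms(1) s(1) supp_in_unitv norm1_unitv unfolding crn_def by auto
  then obtain p where p: "(unitv s, p) \<in> R" by (auto simp: Rr_def)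
  have "1 / real (card R) \<le> propensity R vol d (unitv s, p)"
    using propensity_unitv_ge[OF \<open>finite R\<close> p] s(2) by simp
  also have "\<dots> \<le> prop_tot R vol d" by (rule propensity_le_prop_tot[OF \<open>finite R\<close> assms(3) p])
  finally show ?thesis .
qed

section \<open>Expected waiting time for a set of reactions\<close>

definition rxn_paths :: "rxn set \<Rightarrow> nat \<Rightarrow> rxn list set" where
  "rxn_paths R k = {xs. set xs \<subseteq> R \<and> length xs = k}"

definition path_end :: "conf \<Rightarrow> rxn list \<Rightarrow> conf" where
  "path_end c xs = path_conf c xs (length xs)"

definition survives :: "rxn set \<Rightarrow> rxn set \<Rightarrow> conf \<Rightarrow> rxn list \<Rightarrow> bool" where
  "survives R Q c xs \<longleftrightarrow> (\<forall>s. 0 < s \<and> s \<le> length xs \<longrightarrow> \<not> tau_hit R Q (path_conf c xs) (\<lambda>i. xs ! i) 0 s)"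

definition some_applicable :: "rxn set \<Rightarrow> rxn set \<Rightarrow> conf \<Rightarrow> bool" where
  "some_applicable R Q d \<longleftrightarrow> (\<exists>\<beta>\<in>Q. \<beta> \<in> app R d)"

definition set_propensity :: "rxn set \<Rightarrow> real \<Rightarrow> rxn set \<Rightarrow> conf \<Rightarrow> real" where
  "set_propensity R vol Q d = (\<Sum>\<alpha>\<in>Q. propensity R vol d \<alpha>)"

definition survival_mean :: "rxn set \<Rightarrow> real \<Rightarrow> rxn set \<Rightarrow> conf \<Rightarrow> nat \<Rightarrow> (conf \<Rightarrow> real) \<Rightarrow> real" where
  "survival_mean R vol Q c k h =
     (\<Sum>xs\<in>rxn_paths R k. if survives R Q c xs then path_prob R vol c xs * h (path_end c xs) else 0)"

lemma rxn_paths_0: "rxn_paths R 0 = {[]}"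
  by (auto simp: rxn_paths_def)

lemma rxn_paths_Suc: "rxn_paths R (Suc k) = (\<lambda>(xs, a). xs @ [a]) ` (rxn_paths R k \<times> R)"
proof
  show "rxn_paths R (Suc k) \<subseteq> (\<lambda>(xs, a). xs @ [a]) ` (rxn_paths R k \<times> R)"
  proof
    fix ys assume "ys \<in> rxn_paths R (Suc k)"
    then have ys: "set ys \<subseteq> R" "length ys = Suc k" by (auto simp: rxn_paths_def)
    then obtain xs a where "ys = xs @ [a]" by (metis length_Suc_conv_rev)
    with ys show "ys \<in> (\<lambda>(xs, a). xs @ [a]) ` (rxn_paths R k \<times> R)"
      by (auto simp: rxn_paths_def image_iff)
  qed
qed (auto simp: rxn_paths_def)

lemma sum_rxn_paths_Suc: "(\<Sum>ys\<in>rxn_paths R (Suc k). f ys) = (\<Sum>xs\<in>rxn_paths R k. \<Sum>a\<in>R. f (xs @ [a]))"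
proof -
  have "inj_on (\<lambda>(xs, a). xs @ [a]) (rxn_paths R k \<times> R)" by (auto simp: inj_on_def)
  then have "(\<Sum>ys\<in>rxn_paths R (Suc k). f ys) = (\<Sum>p\<in>rxn_paths R k \<times> R. f ((\<lambda>(xs, a). xs @ [a]) p))"
    unfolding rxn_paths_Suc by (rule sum.reindex[unfolded comp_def])
  then show ?thesis by (simp add: sum.cartesian_product case_prod_unfold)
qed

lemma path_conf_snoc: "i \<le> length xs \<Longrightarrow> path_conf c (xs @ [a]) i = path_conf c xs i"
  by (simp add: path_conf_def)

lemma path_conf_snoc_length: "path_conf c (xs @ [a]) (Suc (length xs)) = apply_rxn a (path_end c xs)"
  by (simp add: path_end_def path_conf_def)

lemma path_end_Nil: "path_end c [] = c"
  by (simp add: path_end_def path_conf_def)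

lemma path_end_snoc: "path_end c (xs @ [a]) = apply_rxn a (path_end c xs)"
  by (simp add: path_end_def path_conf_def)

lemma path_prob_Nil: "path_prob R vol c [] = 1"
  by (simp add: path_prob_def)

lemma path_prob_snoc:
  "path_prob R vol c (xs @ [a]) =
     path_prob R vol c xs * (propensity R vol (path_end c xs) a / prop_tot R vol (path_end c xs))"
proof -
  have "(\<Prod>i<length xs. propensity R vol (path_conf c (xs @ [a]) i) ((xs @ [a]) ! i)
          / prop_tot R vol (path_conf c (xs @ [a]) i)) = path_prob R vol c xs"
    unfolding path_prob_def by (rule prod.cong) (auto simp: path_conf_snoc nth_append)
  then show ?thesis by (simp add: path_prob_def path_conf_snoc path_end_def)
qed

lemma survives_Nil: "survives R Q c []"
  by (simp add: survives_def)

lemma survives_iff: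
  assumes "some_applicable R Q c"
  shows "survives R Q c xs \<longleftrightarrow>
    (\<forall>i<length xs. xs ! i \<notin> Q) \<and> (\<forall>u\<le>length xs. some_applicable R Q (path_conf c xs u))"
proof
  assume "survives R Q c xs"
  then have nh: "\<And>s. 0 < s \<Longrightarrow> s \<le> length xs \<Longrightarrow>
      xs ! (s - 1) \<notin> Q \<and> (\<forall>u\<le>s. some_applicable R Q (path_conf c xs u))"
    unfolding survives_def tau_hit_def some_applicable_def by auto
  show "(\<forall>i<length xs. xs ! i \<notin> Q) \<and> (\<forall>u\<le>length xs. some_applicable R Q (path_conf c xs u))"
  proof (intro conjI allI impI)
    fix i assume "i < length xs" then show "xs ! i \<notin> Q" using nh[of "Suc i"] by auto
  next
    fix u assume u: "u \<le> length xs"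
    show "some_applicable R Q (path_conf c xs u)"
    proof (cases "u = 0")
      case True then show ?thesis using assms by (simp add: path_conf_def)
    next
      case False
      then have "0 < length xs" using u by linarith
      then show ?thesis using nh[of "length xs"] u by auto
    qed
  qed
next
  assume "(\<forall>i<length xs. xs ! i \<notin> Q) \<and> (\<forall>u\<le>length xs. some_applicable R Q (path_conf c xs u))"
  then show "survives R Q c xs" unfolding survives_def tau_hit_def some_applicable_def
    by (metis Suc_diff_1 Suc_le_lessD order.trans)
qed

lemma survives_snoc:
  assumes "some_applicable R Q c"
  shows "survives R Q c (xs @ [a]) \<longleftrightarrow>
    survives R Q c xs \<and> a \<notin> Q \<and> some_applicable R Q (apply_rxn a (path_end c xs))"
proof -
  have "(\<forall>i<length (xs @ [a]). (xs @ [a]) ! i \<notin> Q) \<longleftrightarrow> (\<forall>i<length xs. xs ! i \<notin> Q) \<and> a \<notin> Q"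
    by (auto simp: nth_append less_Suc_eq)
  moreover have "(\<forall>u\<le>length (xs @ [a]). some_applicable R Q (path_conf c (xs @ [a]) u)) \<longleftrightarrow>
     (\<forall>u\<le>length xs. some_applicable R Q (path_conf c xs u)) \<and> some_applicable R Q (apply_rxn a (path_end c xs))"
    by (auto simp: path_conf_snoc path_conf_snoc_length le_Suc_eq)
  ultimately show ?thesis using survives_iff[OF assms] by auto
qed

lemma survival_mean_nonneg: "0 \<le> vol \<Longrightarrow> (\<And>d. 0 \<le> h d) \<Longrightarrow> 0 \<le> survival_mean R vol Q c k h"
  unfolding survival_mean_def by (auto intro!: sum_nonneg mult_nonneg_nonneg path_prob_nonneg)

lemma survival_mean_scale: "survival_mean R vol Q c k (\<lambda>d. a * h d) = a * survival_mean R vol Q c k h"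
  unfolding survival_mean_def sum_distrib_left by (intro sum.cong) (auto simp: mult.left_commute)

lemma TC_eq_suminf_survival_mean:
  assumes "0 \<le> vol"
  shows "TC R vol Q c = (\<Sum>k. ennreal (survival_mean R vol Q c k (\<lambda>d. 1 / prop_tot R vol d)))"
  unfolding TC_def
proof (rule suminf_cong)
  fix k
  show "(\<Sum>xs\<in>{xs. set xs \<subseteq> R \<and> length xs = k}.
          if \<forall>s. 0 < s \<and> s \<le> k \<longrightarrow> \<not> tau_hit R Q (path_conf c xs) ((!) xs) 0 s
          then ennreal (path_prob R vol c xs * (1 / prop_tot R vol (path_conf c xs k))) else 0)
     = ennreal (survival_mean R vol Q c k (\<lambda>d. 1 / prop_tot R vol d))" (is "?TC_k = _")
  proof -
    have "?TC_k = (\<Sum>xs\<in>rxn_paths R k. ennreal (if survives R Q c xs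
        then path_prob R vol c xs * (1 / prop_tot R vol (path_end c xs)) else 0))"
      unfolding rxn_paths_def by (rule sum.cong) (auto simp: survives_def path_end_def)
    also have "\<dots> = ennreal (survival_mean R vol Q c k (\<lambda>d. 1 / prop_tot R vol d))"
      unfolding survival_mean_def using assms
      by (intro sum_ennreal) (auto intro!: divide_nonneg_nonneg path_prob_nonneg prop_tot_nonneg)
    finally show ?thesis .
  qed
qed

text \<open>With Q empty, \<tau> occurs right after the first step.\<close>

lemma TC_empty:
  assumes "0 \<le> vol"
  shows "TC R vol {} c = ennreal (1 / prop_tot R vol c)"
proof -
  have "\<not> survives R {} c xs" if "xs \<noteq> []" for xs
    using that unfolding survives_def tau_hit_def by (auto intro!: exI[of _ 1] simp: Suc_le_eq)
  then have "survival_mean R vol {} c k (\<lambda>d. 1 / prop_tot R vol d) = 0" if "k \<noteq> 0" for k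
    unfolding survival_mean_def using that by (intro sum.neutral) (auto simp: rxn_paths_def)
  then have "(\<Sum>k. ennreal (survival_mean R vol {} c k (\<lambda>d. 1 / prop_tot R vol d)))
      = (\<Sum>k\<in>{0}. ennreal (survival_mean R vol {} c k (\<lambda>d. 1 / prop_tot R vol d)))"
    by (intro suminf_finite) auto
  then show ?thesis
    by (simp add: TC_eq_suminf_survival_mean[OF assms] survival_mean_def rxn_paths_0 survives_Nil
        path_prob_Nil path_end_Nil)
qed

lemma TC_empty_le_card:
  assumes "crn S R" "is_config S d" "0 < vol"
  shows "TC R vol {} d \<le> ennreal (real (card R))"
proof -
  have "finite R" using assms(1) by (simp add: crn_def)
  have ge: "1 / real (card R) \<le> prop_tot R vol d" using prop_tot_ge[OF assms(1,2)] assms(3) by simp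
  have "1 / prop_tot R vol d \<le> real (card R)"
  proof (cases "card R = 0")
    case True
    with \<open>finite R\<close> show ?thesis by (simp add: prop_tot_def)
  next
    case False
    with ge have "0 < prop_tot R vol d" by (smt (verit) divide_pos_pos of_nat_0_less_iff not_gr0)
    with ge False show ?thesis by (simp add: divide_le_eq le_divide_eq mult.commute)
  qed
  then show ?thesis using TC_empty assms(3) by (simp add: ennreal_leI)
qed

locale waiting_set =
  fixes R :: "rxn set" and vol :: real and Q :: "rxn set" and c :: conf and W :: "conf set"
  assumes finite_R: "finite R" and Q_subset: "Q \<subseteq> R" and vol_pos: "0 < vol" and c_in_W: "c \<in> W"
    and prop_tot_pos: "\<And>d. d \<in> W \<Longrightarrow> 0 < prop_tot R vol d"
    and W_closed: "\<And>d \<alpha>. d \<in> W \<Longrightarrow> \<alpha> \<in> R \<Longrightarrow> \<alpha> \<notin> Q \<Longrightarrow> fst \<alpha> \<le> d \<Longrightarrow> apply_rxn \<alpha> d \<in> W"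
    and Q_applicable: "\<And>d. d \<in> W \<Longrightarrow> some_applicable R Q d"
begin

abbreviation survival_prob :: "nat \<Rightarrow> real" where
  "survival_prob k \<equiv> survival_mean R vol Q c k (\<lambda>_. 1)"

abbreviation hit_prob :: "nat \<Rightarrow> real" where
  "hit_prob k \<equiv> survival_mean R vol Q c k (\<lambda>d. set_propensity R vol Q d / prop_tot R vol d)"

abbreviation step_time :: "nat \<Rightarrow> real" where
  "step_time k \<equiv> survival_mean R vol Q c k (\<lambda>d. 1 / prop_tot R vol d)"

lemma path_end_in_W: "set xs \<subseteq> R \<Longrightarrow> survives R Q c xs \<Longrightarrow> path_prob R vol c xs \<noteq> 0 \<Longrightarrow> path_end c xs \<in> W"
proof (induction xs rule: rev_induct)
  case Nil
  then show ?case using c_in_W by (simp add: path_end_Nil)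
next
  case (snoc a xs)
  have "survives R Q c xs" "a \<notin> Q"
    using snoc.prems(2) survives_snoc[OF Q_applicable[OF c_in_W]] by auto
  moreover have "path_prob R vol c xs \<noteq> 0" "propensity R vol (path_end c xs) a \<noteq> 0"
    using snoc.prems(3) by (auto simp: path_prob_snoc)
  ultimately show ?case
    using snoc W_closed applicable_if_propensity_nonzero by (auto simp: path_end_snoc)
qed

lemma survival_mean_mono:
  assumes "\<And>d. d \<in> W \<Longrightarrow> h d \<le> g d"
  shows "survival_mean R vol Q c k h \<le> survival_mean R vol Q c k g"
  unfolding survival_mean_def
proof (rule sum_mono)
  fix xs assume xs: "xs \<in> rxn_paths R k"
  show "(if survives R Q c xs then path_prob R vol c xs * h (path_end c xs) else 0)
      \<le> (if survives R Q c xs then path_prob R vol c xs * g (path_end c xs) else 0)"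
  proof (cases "survives R Q c xs \<and> path_prob R vol c xs \<noteq> 0")
    case True
    then have "path_end c xs \<in> W" using path_end_in_W xs by (auto simp: rxn_paths_def)
    then show ?thesis
      using assms path_prob_nonneg[of vol R c xs] vol_pos by (auto intro: mult_left_mono)
  qed auto
qed

lemma survival_weight_snoc:
  assumes "survives R Q c xs" "path_end c xs \<in> W" "a \<in> R"
  shows "(if survives R Q c (xs @ [a]) then path_prob R vol c (xs @ [a]) else 0) =
    (if a \<notin> Q then path_prob R vol c xs * (propensity R vol (path_end c xs) a / prop_tot R vol (path_end c xs)) else 0)"
proof (cases "a \<notin> Q \<and> propensity R vol (path_end c xs) a \<noteq> 0")
  case True
  then have "apply_rxn a (path_end c xs) \<in> W"
    using W_closed[OF assms(2,3)] applicable_if_propensity_nonzero by blast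
  then show ?thesis
    using True assms(1) by (simp add: survives_snoc[OF Q_applicable[OF c_in_W]] Q_applicable path_prob_snoc)
qed (auto simp: survives_snoc[OF Q_applicable[OF c_in_W]] path_prob_snoc)

lemma survival_weight_split:
  assumes "set xs \<subseteq> R"
  shows "(if survives R Q c xs then path_prob R vol c xs else 0) =
    (\<Sum>a\<in>R. if survives R Q c (xs @ [a]) then path_prob R vol c (xs @ [a]) else 0)
    + (if survives R Q c xs
       then path_prob R vol c xs * (set_propensity R vol Q (path_end c xs) / prop_tot R vol (path_end c xs))
       else 0)"
proof (cases "survives R Q c xs \<and> path_prob R vol c xs \<noteq> 0")
  case True
  let ?d = "path_end c xs" and ?P = "path_prob R vol c xs"
  have d: "?d \<in> W" using path_end_in_W assms True by blast
  have "(\<Sum>a\<in>R. if survives R Q c (xs @ [a]) then path_prob R vol c (xs @ [a]) else 0)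
     = (\<Sum>a\<in>R - Q. ?P * (propensity R vol ?d a / prop_tot R vol ?d))"
    using True d finite_R by (simp add: survival_weight_snoc sum.If_cases Diff_eq Collect_neg_eq)
  also have "\<dots> = (\<Sum>a\<in>R. ?P * (propensity R vol ?d a / prop_tot R vol ?d))
      - (\<Sum>a\<in>Q. ?P * (propensity R vol ?d a / prop_tot R vol ?d))"
    using finite_R Q_subset by (simp add: sum_diff finite_subset)
  also have "(\<Sum>a\<in>R. ?P * (propensity R vol ?d a / prop_tot R vol ?d)) = ?P"
    using prop_tot_pos[OF d] by (simp add: prop_tot_def flip: sum_distrib_left sum_divide_distrib)
  also have "(\<Sum>a\<in>Q. ?P * (propensity R vol ?d a / prop_tot R vol ?d)) = ?P * (set_propensity R vol Q ?d / prop_tot R vol ?d)"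
    by (simp add: set_propensity_def flip: sum_distrib_left sum_divide_distrib)
  finally show ?thesis using True by simp
next
  case False
  then show ?thesis
    by (auto simp: survives_snoc[OF Q_applicable[OF c_in_W]] path_prob_snoc intro!: sum.neutral)
qed

lemma survival_prob_Suc: "survival_prob k = survival_prob (Suc k) + hit_prob k"
proof -
  have "survival_prob k = (\<Sum>xs\<in>rxn_paths R k.
      (\<Sum>a\<in>R. if survives R Q c (xs @ [a]) then path_prob R vol c (xs @ [a]) else 0)
      + (if survives R Q c xs
         then path_prob R vol c xs * (set_propensity R vol Q (path_end c xs) / prop_tot R vol (path_end c xs))
         else 0))"
    unfolding survival_mean_def mult_1_right
    by (rule sum.cong[OF refl], rule survival_weight_split) (simp add: rxn_paths_def)
  then show ?thesis unfolding survival_mean_def mult_1_right sum_rxn_paths_Suc by (simp add: sum.distrib)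
qed

lemma sum_hit_prob: "(\<Sum>k<K. hit_prob k) = 1 - survival_prob K"
proof -
  have "hit_prob k = survival_prob k - survival_prob (Suc k)" for k
    using survival_prob_Suc[of k] by linarith
  then have "(\<Sum>k<K. hit_prob k) = (\<Sum>k<K. survival_prob k - survival_prob (Suc k))"
    by presburger
  also have "\<dots> = survival_prob 0 - survival_prob K" by (rule sum_lessThan_telescope')
  finally show ?thesis by (simp add: survival_mean_def rxn_paths_0 survives_Nil path_prob_Nil)
qed

lemma survival_prob_antimono: "k \<le> K \<Longrightarrow> survival_prob K \<le> survival_prob k"
proof (induction K rule: dec_induct)
  case (step K)
  moreover have "0 \<le> hit_prob K"
    using vol_pos by (intro survival_mean_nonneg) (auto intro: divide_nonneg_nonneg
        simp: set_propensity_def sum_nonneg propensity_nonneg prop_tot_nonneg)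
  ultimately show ?case using survival_prob_Suc[of K] by linarith
qed simp

lemma sum_step_time_ennreal: "(\<Sum>k<K. ennreal (step_time k)) = ennreal (\<Sum>k<K. step_time k)"
  using vol_pos by (intro sum_ennreal) (auto intro!: survival_mean_nonneg prop_tot_nonneg)

lemma TC_le_inverse_rate:
  assumes qmin: "0 < qmin" and q: "\<And>d. d \<in> W \<Longrightarrow> qmin \<le> set_propensity R vol Q d"
  shows "TC R vol Q c \<le> ennreal (1 / qmin)"
proof -
  have "qmin * step_time k \<le> hit_prob k" for k
  proof -
    have "qmin * step_time k = survival_mean R vol Q c k (\<lambda>d. qmin / prop_tot R vol d)"
      by (simp flip: survival_mean_scale)
    also have "\<dots> \<le> hit_prob k"
      by (rule survival_mean_mono) (use q prop_tot_pos in \<open>auto intro: divide_right_mono less_imp_le\<close>)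
    finally show ?thesis .
  qed
  then have "qmin * (\<Sum>k<K. step_time k) \<le> 1 - survival_prob K" for K
    by (simp add: sum_distrib_left sum_mono flip: sum_hit_prob)
  moreover have "0 \<le> survival_prob K" for K
    using vol_pos by (intro survival_mean_nonneg) auto
  ultimately have "(\<Sum>k<K. step_time k) \<le> 1 / qmin" for K
    using qmin by (smt (verit) le_divide_eq mult.commute)
  then show ?thesis
    unfolding TC_eq_suminf_survival_mean[OF less_imp_le[OF vol_pos]]
    by (intro suminf_le_const) (auto simp: sum_step_time_ennreal intro: ennreal_leI)
qed

lemma sum_step_time_ge:
  assumes qmax: "0 < qmax" and q: "\<And>d. d \<in> W \<Longrightarrow> set_propensity R vol Q d \<le> qmax"
    and pt: "\<And>d. d \<in> W \<Longrightarrow> prop_tot R vol d \<le> ptmax" and K: "ptmax \<le> qmax * real K"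
  shows "1 \<le> 2 * qmax * (\<Sum>k<K. step_time k)"
proof -
  have ptmax: "0 < ptmax" using prop_tot_pos[OF c_in_W] pt[OF c_in_W] by simp
  have "hit_prob k \<le> qmax * step_time k" for k
  proof -
    have "hit_prob k \<le> survival_mean R vol Q c k (\<lambda>d. qmax * (1 / prop_tot R vol d))"
      by (rule survival_mean_mono) (use q prop_tot_pos in \<open>auto intro: divide_right_mono less_imp_le\<close>)
    then show ?thesis by (simp only: survival_mean_scale)
  qed
  then have hit: "1 - survival_prob K \<le> qmax * (\<Sum>k<K. step_time k)"
    by (simp add: sum_distrib_left sum_mono flip: sum_hit_prob)
  have "survival_prob k \<le> ptmax * step_time k" for k
  proof -
    have "survival_prob k \<le> survival_mean R vol Q c k (\<lambda>d. ptmax * (1 / prop_tot R vol d))"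
      by (rule survival_mean_mono) (use pt prop_tot_pos in \<open>simp add: le_divide_eq\<close>)
    then show ?thesis by (simp only: survival_mean_scale)
  qed
  then have "real K * survival_prob K \<le> ptmax * (\<Sum>k<K. step_time k)"
    using survival_prob_antimono
    by (simp add: sum_distrib_left) (smt (verit) lessThan_iff less_imp_le sum_mono card_lessThan sum_constant)
  moreover have "ptmax * survival_prob K \<le> qmax * (real K * survival_prob K)"
    using K vol_pos survival_mean_nonneg[of vol "\<lambda>_. 1"]
    by (metis mult.assoc mult_right_mono le_numeral_extra(1) less_imp_le)
  ultimately have "survival_prob K \<le> qmax * (\<Sum>k<K. step_time k)"
    using ptmax qmax by (smt (verit) mult_le_cancel_left_pos mult.left_commute)
  with hit show ?thesis by linarith
qed

lemma TC_ge_half_inverse_rate: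
  assumes qmax: "0 < qmax" and q: "\<And>d. d \<in> W \<Longrightarrow> set_propensity R vol Q d \<le> qmax"
    and pt: "\<And>d. d \<in> W \<Longrightarrow> prop_tot R vol d \<le> ptmax"
  shows "ennreal (1 / (2 * qmax)) \<le> TC R vol Q c"
proof -
  define K where "K = nat \<lceil>ptmax / qmax\<rceil>"
  have "ptmax / qmax \<le> real K" unfolding K_def by linarith
  then have "ptmax \<le> qmax * real K" using qmax by (simp add: pos_divide_le_eq mult.commute)
  then have "1 / (2 * qmax) \<le> (\<Sum>k<K. step_time k)"
    using sum_step_time_ge[OF qmax q pt] qmax by (simp add: divide_le_eq mult.commute)
  also have "ennreal (\<Sum>k<K. step_time k) \<le> (\<Sum>k. ennreal (step_time k))"
    by (simp flip: sum_step_time_ennreal add: sum_le_suminf)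
  finally show ?thesis
    by (simp add: TC_eq_suminf_survival_mean[OF less_imp_le[OF vol_pos]] ennreal_leI)
qed

end

section \<open>Rounds\<close>

lemma tau_eq_enatD:
  assumes "tau R Q cs as t = enat s"
  shows "t < s \<and> tau_hit R Q cs as t s"
proof -
  have ex: "\<exists>s>t. tau_hit R Q cs as t s" using assms by (auto simp: tau_def split: if_splits)
  then have "s = (LEAST s. s > t \<and> tau_hit R Q cs as t s)" using assms by (simp add: tau_def)
  then show ?thesis using LeastI_ex[OF ex] by simp
qed

lemma Suc_le_tau: "enat (Suc t) \<le> tau R Q cs as t"
  by (cases "tau R Q cs as t") (auto dest: tau_eq_enatD)

lemma tau_empty: "tau R {} cs as t = enat (Suc t)"
proof -
  have hit: "tau_hit R {} cs as t (Suc t)" by (auto simp: tau_hit_def)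
  then have "(LEAST s. s > t \<and> tau_hit R {} cs as t s) = Suc t"
    by (intro Least_equality) auto
  with hit show ?thesis by (auto simp: tau_def)
qed

lemma enat_le_round_t:
  assumes "skipping_policy \<sigma>"
  shows "enat i \<le> round_t R \<rho> \<sigma> cs as i"
proof (induction i)
  case 0
  then show ?case by (simp add: zero_enat_def[symmetric])
next
  case (Suc i)
  show ?case
  proof (cases "round_t R \<rho> \<sigma> cs as i")
    case (enat t)
    then have "enat (Suc i) \<le> enat (Suc (\<sigma> t))"
      using Suc assms by (auto simp: skipping_policy_def intro: order.trans)
    also have "\<dots> \<le> tau R (\<rho> (cs (\<sigma> t))) cs as (\<sigma> t)" by (rule Suc_le_tau)
    finally show ?thesis using enat by simp
  qed simp
qed

lemma le_round_t_Least:
  "skipping_policy \<sigma> \<Longrightarrow> enat t \<le> round_t R \<rho> \<sigma> cs as (LEAST i. enat t \<le> round_t R \<rho> \<sigma> cs as i)"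
  by (rule LeastI[of _ t]) (rule enat_le_round_t)

lemma round_t_identity:
  assumes "\<And>i. i \<le> M \<Longrightarrow> \<rho> (cs i) = {}"
  shows "i \<le> Suc M \<Longrightarrow> round_t R \<rho> (\<lambda>t. t) cs as i = enat i"
proof (induction i)
  case 0
  then show ?case by (simp add: zero_enat_def)
next
  case (Suc i)
  then show ?case using assms[of i] by (simp add: tau_empty)
qed

definition stab_round :: "nat set \<Rightarrow> rxn set \<Rightarrow> iface \<Rightarrow> (conf \<Rightarrow> rxn set) \<Rightarrow> (nat \<Rightarrow> nat)
    \<Rightarrow> (nat \<Rightarrow> conf) \<Rightarrow> (nat \<Rightarrow> rxn) \<Rightarrow> nat" where
  "stab_round S R I \<rho> \<sigma> cs as = (LEAST i. enat (stab_step S R I cs) \<le> round_t R \<rho> \<sigma> cs as i)"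

definition round_cost :: "nat set \<Rightarrow> rxn set \<Rightarrow> (nat \<Rightarrow> real) \<Rightarrow> (conf \<Rightarrow> rxn set) \<Rightarrow> (nat \<Rightarrow> nat)
    \<Rightarrow> (nat \<Rightarrow> conf) \<Rightarrow> (nat \<Rightarrow> rxn) \<Rightarrow> nat \<Rightarrow> ennreal" where
  "round_cost S R \<phi> \<rho> \<sigma> cs as i =
     (let e = cs (\<sigma> (the_enat (round_t R \<rho> \<sigma> cs as i))) in TC R (\<phi> (norm1 S (cs 0))) (\<rho> e) e)"

lemma RT_exec_eq_sum_round_cost:
  "RT_exec S R I \<phi> \<rho> \<sigma> cs as = (\<Sum>i<stab_round S R I \<rho> \<sigma> cs as. round_cost S R \<phi> \<rho> \<sigma> cs as i)"
  by (simp add: RT_exec_def stab_round_def round_cost_def Let_def)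

lemma round_cost_0:
  "round_cost S R \<phi> \<rho> \<sigma> cs as 0 = TC R (\<phi> (norm1 S (cs 0))) (\<rho> (cs (\<sigma> 0))) (cs (\<sigma> 0))"
  by (simp add: round_cost_def zero_enat_def Let_def)

lemma TC_first_round_le_RT_exec:
  assumes "skipping_policy \<sigma>" "0 < stab_step S R I cs"
  shows "TC R (\<phi> (norm1 S (cs 0))) (\<rho> (cs (\<sigma> 0))) (cs (\<sigma> 0)) \<le> RT_exec S R I \<phi> \<rho> \<sigma> cs as"
proof -
  have "enat (stab_step S R I cs) \<le> round_t R \<rho> \<sigma> cs as (stab_round S R I \<rho> \<sigma> cs as)"
    unfolding stab_round_def by (rule le_round_t_Least[OF assms(1)])
  then have "{..<1} \<subseteq> {..<stab_round S R I \<rho> \<sigma> cs as}"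
    using assms(2) by (cases "stab_round S R I \<rho> \<sigma> cs as") (auto simp: zero_enat_def)
  then have "(\<Sum>i<1. round_cost S R \<phi> \<rho> \<sigma> cs as i) \<le> RT_exec S R I \<phi> \<rho> \<sigma> cs as"
    unfolding RT_exec_eq_sum_round_cost by (intro sum_mono2) auto
  then show ?thesis by (simp add: round_cost_0)
qed

lemma sum_TC_empty_le_RT_exec:
  assumes empty: "\<And>i. i \<le> M \<Longrightarrow> \<rho> (cs i) = {}" and stab: "stab_step S R I cs = Suc M"
  shows "(\<Sum>i\<le>M. TC R (\<phi> (norm1 S (cs 0))) {} (cs i)) \<le> RT_exec S R I \<phi> \<rho> (\<lambda>t. t) cs as"
proof -
  note rounds = round_t_identity[where M = M and \<rho> = \<rho> and cs = cs and R = R and as = as, OF empty]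
  have "enat (Suc M) \<le> round_t R \<rho> (\<lambda>t. t) cs as (stab_round S R I \<rho> (\<lambda>t. t) cs as)"
    unfolding stab_round_def stab by (rule le_round_t_Least) (simp add: skipping_policy_def)
  then have "{..M} \<subseteq> {..<stab_round S R I \<rho> (\<lambda>t. t) cs as}"
    using rounds[of "stab_round S R I \<rho> (\<lambda>t. t) cs as"]
    by (cases "stab_round S R I \<rho> (\<lambda>t. t) cs as \<le> M") auto
  then have "(\<Sum>i\<le>M. round_cost S R \<phi> \<rho> (\<lambda>t. t) cs as i) \<le> RT_exec S R I \<phi> \<rho> (\<lambda>t. t) cs as"
    unfolding RT_exec_eq_sum_round_cost by (intro sum_mono2) auto
  moreover have "round_cost S R \<phi> \<rho> (\<lambda>t. t) cs as i = TC R (\<phi> (norm1 S (cs 0))) {} (cs i)" if "i \<le> M" for i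
    using rounds[of i] empty[OF that] that by (simp add: round_cost_def)
  ultimately show ?thesis by simp
qed

lemma RT_exec_le_TC_first_round:
  assumes "enat (stab_step S R I cs) \<le> round_t R \<rho> \<sigma> cs as 1"
  shows "RT_exec S R I \<phi> \<rho> \<sigma> cs as \<le> TC R (\<phi> (norm1 S (cs 0))) (\<rho> (cs (\<sigma> 0))) (cs (\<sigma> 0))"
proof -
  have "stab_round S R I \<rho> \<sigma> cs as \<le> 1" unfolding stab_round_def by (rule Least_le) (rule assms)
  then have "RT_exec S R I \<phi> \<rho> \<sigma> cs as \<le> (\<Sum>i<1. round_cost S R \<phi> \<rho> \<sigma> cs as i)"
    unfolding RT_exec_eq_sum_round_cost by (intro sum_mono2) auto
  then show ?thesis by (simp add: round_cost_0)
qed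

definition runs :: "nat set \<Rightarrow> rxn set \<Rightarrow> iface \<Rightarrow> nat \<Rightarrow> ((nat \<Rightarrow> conf) \<times> (nat \<Rightarrow> rxn) \<times> (nat \<Rightarrow> nat)) set" where
  "runs S R I n = {(cs, as, \<sigma>). is_exec S R cs as \<and> weakly_fair R cs as \<and> valid_init S I (cs 0)
      \<and> norm1 S (cs 0) = n \<and> skipping_policy \<sigma>}"

lemma RT_stab_runs:
  "RT_stab S R I \<phi> P n =
     (INF \<rho> \<in> {\<rho>. runtime_policy S R \<rho> \<and> P \<rho>}. SUP (cs, as, \<sigma>) \<in> runs S R I n. RT_exec S R I \<phi> \<rho> \<sigma> cs as)"
  by (simp add: RT_stab_def runs_def)

lemma RT_stab_le_if:
  assumes "runtime_policy S R \<rho>" "P \<rho>"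
    and "\<And>cs as \<sigma>. (cs, as, \<sigma>) \<in> runs S R I n \<Longrightarrow> RT_exec S R I \<phi> \<rho> \<sigma> cs as \<le> B"
  shows "RT_stab S R I \<phi> P n \<le> B"
  unfolding RT_stab_runs using assms by (intro INF_lower2[of \<rho>] SUP_least) auto

lemma RT_stab_ge_if:
  assumes "\<And>\<rho>. runtime_policy S R \<rho> \<Longrightarrow> P \<rho> \<Longrightarrow>
      \<exists>cs as \<sigma>. (cs, as, \<sigma>) \<in> runs S R I n \<and> B \<le> RT_exec S R I \<phi> \<rho> \<sigma> cs as"
  shows "B \<le> RT_stab S R I \<phi> P n"
  unfolding RT_stab_runs
proof (rule INF_greatest)
  fix \<rho> assume "\<rho> \<in> {\<rho>. runtime_policy S R \<rho> \<and> P \<rho>}"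
  then obtain cs as \<sigma> where "(cs, as, \<sigma>) \<in> runs S R I n" "B \<le> RT_exec S R I \<phi> \<rho> \<sigma> cs as"
    using assms by blast
  then show "B \<le> (SUP (cs, as, \<sigma>) \<in> runs S R I n. RT_exec S R I \<phi> \<rho> \<sigma> cs as)"
    by (intro SUP_upper2) auto
qed

section \<open>The protocol\<close>

text \<open>Species 0 is inert, 1 is X, 2 and 3 are the token states A and B, and 4 is the output Z.
Every other reactant vector gets a void reaction, since the model requires each R(r) to be
nonempty.\<close>

definition species :: "nat set" where
  "species = {0, 1, 2, 3, 4}"

definition rxn_AB :: rxn where "rxn_AB = (unitv 2, unitv 3)"
definition rxn_BA :: rxn where "rxn_BA = (unitv 3, unitv 2)"
definition rxn_AZ :: rxn where "rxn_AZ = (unitv 2, unitv 4)"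
definition rxn_BZ :: rxn where "rxn_BZ = (unitv 3, unitv 4)"
definition rxn_XX :: rxn where "rxn_XX = (unitv2 1, unitv2 4)"

definition Z_rxns :: "rxn set" where
  "Z_rxns = {rxn_AZ, rxn_BZ, rxn_XX}"

definition reactant_vectors :: "conf set" where
  "reactant_vectors = {r. supp_in species r \<and> 1 \<le> norm1 species r \<and> norm1 species r \<le> 2}"

definition rxns :: "rxn set" where
  "rxns = {rxn_AB, rxn_BA, rxn_AZ, rxn_BZ, rxn_XX}
     \<union> (\<lambda>r. (r, r)) ` (reactant_vectors - {unitv 2, unitv 3, unitv2 1})"

definition confA :: "nat \<Rightarrow> conf" where
  "confA m = (\<lambda>s. if s = 0 then m else if s = 1 then 2 else if s = 2 then 1 else 0)"

definition confB :: "nat \<Rightarrow> conf" where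
  "confB m = (\<lambda>s. if s = 0 then m else if s = 1 then 2 else if s = 3 then 1 else 0)"

definition confZ :: "nat \<Rightarrow> conf" where
  "confZ m = (\<lambda>s. if s = 0 then m else if s = 1 then 2 else if s = 4 then 1 else 0)"

definition confZZZ :: "nat \<Rightarrow> conf" where
  "confZZZ m = (\<lambda>s. if s = 0 then m else if s = 4 then 3 else 0)"

definition Z_iface :: iface where
  "Z_iface = (UNIV, id, {(c0, c). c0 \<in> range confA \<and> 1 \<le> c 4})"

lemma finite_species [simp]: "finite species"
  by (simp add: species_def)

lemma finite_rxns [simp]: "finite rxns"
proof -
  have "reactant_vectors \<subseteq> {r. supp_in species r \<and> norm1 species r \<le> 2}"
    by (auto simp: reactant_vectors_def)
  then have "finite reactant_vectors" using finite_bounded_vectors[OF finite_species] by (rule finite_subset)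
  then show ?thesis by (simp add: rxns_def)
qed

lemma rxns_cases:
  assumes "\<alpha> \<in> rxns"
  obtains "\<alpha> \<in> {rxn_AB, rxn_BA, rxn_AZ, rxn_BZ, rxn_XX}"
    | r where "\<alpha> = (r, r)" "r \<in> reactant_vectors" "r \<notin> {unitv 2, unitv 3, unitv2 1}"
  using assms by (auto simp: rxns_def)

lemma named_rxns_in_rxns [simp]: "rxn_AB \<in> rxns" "rxn_BA \<in> rxns" "rxn_AZ \<in> rxns" "rxn_BZ \<in> rxns" "rxn_XX \<in> rxns"
  by (auto simp: rxns_def)

lemma fst_named_rxns:
  "fst rxn_AB = unitv 2" "fst rxn_BA = unitv 3" "fst rxn_AZ = unitv 2" "fst rxn_BZ = unitv 3"
  "fst rxn_XX = unitv2 1"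
  by (simp_all add: rxn_AB_def rxn_BA_def rxn_AZ_def rxn_BZ_def rxn_XX_def)

lemma rxns_wellformed:
  assumes "\<alpha> \<in> rxns"
  shows "supp_in species (fst \<alpha>) \<and> supp_in species (snd \<alpha>)
    \<and> norm1 species (fst \<alpha>) \<in> {1, 2} \<and> norm1 species (fst \<alpha>) = norm1 species (snd \<alpha>)"
proof -
  have "0 \<in> species" "1 \<in> species" "2 \<in> species" "3 \<in> species" "4 \<in> species"
    by (auto simp: species_def)
  with assms show ?thesis
    by (cases rule: rxns_cases)
       (auto simp: rxn_AB_def rxn_BA_def rxn_AZ_def rxn_BZ_def rxn_XX_def reactant_vectors_def
         supp_in_unitv supp_in_unitv2 norm1_unitv norm1_unitv2)
qed

lemma rxns_keep_Z: "\<alpha> \<in> rxns \<Longrightarrow> fst \<alpha> \<le> d \<Longrightarrow> d 4 \<le> apply_rxn \<alpha> d 4"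
  by (erule rxns_cases)
     (auto simp: rxn_AB_def rxn_BA_def rxn_AZ_def rxn_BZ_def rxn_XX_def apply_rxn_def unitv_def unitv2_def)

lemma reach_preserves_config:
  assumes "reach rxns c c'" "is_config species c"
  shows "is_config species c' \<and> norm1 species c' = norm1 species c"
  using assms(1) unfolding reach_def
proof (induction rule: rtranclp_induct)
  case (step d d')
  then obtain \<alpha> where "\<alpha> \<in> rxns" "fst \<alpha> \<le> d" "d' = apply_rxn (fst \<alpha>, snd \<alpha>) d"
    by (auto simp: step_def app_def)
  with step.IH show ?case
    using apply_rxn_mass_preserving[of species d "fst \<alpha>" "snd \<alpha>"] rxns_wellformed
    by (auto simp: is_config_def)
qed (use assms(2) in simp)

lemma reach_Z_mono: "reach rxns c c' \<Longrightarrow> c 4 \<le> c' 4"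
  unfolding reach_def
proof (induction rule: rtranclp_induct)
  case (step d d')
  then obtain \<alpha> where "\<alpha> \<in> rxns" "fst \<alpha> \<le> d" "d' = apply_rxn \<alpha> d" by (auto simp: step_def app_def)
  with step.IH show ?case using rxns_keep_Z by (meson order.trans)
qed simp

lemma crn_rxns: "crn species rxns"
  unfolding crn_def
proof (intro conjI)
  show "\<forall>(r, p)\<in>rxns. supp_in species r \<and> supp_in species p \<and> norm1 species r \<in> {1, 2}
      \<and> norm1 species r \<le> norm1 species p"
    using rxns_wellformed by fastforce
  show "\<forall>r. supp_in species r \<and> 1 \<le> norm1 species r \<and> norm1 species r \<le> 2 \<longrightarrow> Rr rxns r \<noteq> {}"
  proof (intro allI impI)
    fix r assume "supp_in species r \<and> 1 \<le> norm1 species r \<and> norm1 species r \<le> 2"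
    then have "r \<in> {unitv 2, unitv 3, unitv2 1} \<or> (r, r) \<in> rxns"
      by (auto simp: rxns_def reactant_vectors_def)
    then show "Rr rxns r \<noteq> {}"
    proof
      assume "r \<in> {unitv 2, unitv 3, unitv2 1}"
      then have "rxn_AB \<in> Rr rxns r \<or> rxn_BA \<in> Rr rxns r \<or> rxn_XX \<in> Rr rxns r"
        by (auto simp: Rr_def fst_named_rxns)
      then show ?thesis by blast
    qed (auto simp: Rr_def)
  qed
  show "\<forall>r. (r, r) \<in> rxns \<longrightarrow> Rr rxns r = {(r, r)}"
    by (auto simp: Rr_def rxns_def rxn_AB_def rxn_BA_def rxn_AZ_def rxn_BZ_def rxn_XX_def)
  show "finite_density species rxns"
    unfolding finite_density_def by (rule exI[of _ 1]) (use reach_preserves_config in auto)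
qed simp_all

lemma conf_values [simp]:
  "confA m 0 = m" "confA m 1 = 2" "confA m 2 = 1" "confA m 3 = 0" "confA m 4 = 0"
  "confB m 0 = m" "confB m 1 = 2" "confB m 2 = 0" "confB m 3 = 1" "confB m 4 = 0"
  "confZ m 0 = m" "confZ m 1 = 2" "confZ m 2 = 0" "confZ m 3 = 0" "confZ m 4 = 1"
  "confZZZ m 0 = m" "confZZZ m 1 = 0" "confZZZ m 2 = 0" "confZZZ m 3 = 0" "confZZZ m 4 = 3"
  "confA m (Suc 0) = 2" "confB m (Suc 0) = 2" "confZ m (Suc 0) = 2" "confZZZ m (Suc 0) = 0"
  by (simp_all add: confA_def confB_def confZ_def confZZZ_def)

lemma is_config_confs:
  "is_config species (confA m)" "is_config species (confB m)"
  "is_config species (confZ m)" "is_config species (confZZZ m)"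
  by (auto simp: is_config_def supp_in_def norm1_def species_def confA_def confB_def confZ_def confZZZ_def)

lemma norm1_confA: "norm1 species (confA m) = m + 3"
  by (simp add: norm1_def species_def confA_def)

lemma fst_named_rxns_le_iff:
  "fst rxn_AB \<le> d \<longleftrightarrow> 1 \<le> d 2" "fst rxn_BA \<le> d \<longleftrightarrow> 1 \<le> d 3"
  "fst rxn_AZ \<le> d \<longleftrightarrow> 1 \<le> d 2" "fst rxn_BZ \<le> d \<longleftrightarrow> 1 \<le> d 3" "fst rxn_XX \<le> d \<longleftrightarrow> 2 \<le> d 1"
  by (simp_all add: fst_named_rxns unitv_le_iff unitv2_le_iff)

lemma apply_named_rxns:
  "apply_rxn rxn_AB (confA m) = confB m" "apply_rxn rxn_BA (confB m) = confA m"
  "apply_rxn rxn_AZ (confA m) = confZ m" "apply_rxn rxn_BZ (confB m) = confZ m"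
  "apply_rxn rxn_XX (confZ m) = confZZZ m"
  by (auto simp: apply_rxn_def rxn_AB_def rxn_BA_def rxn_AZ_def rxn_BZ_def rxn_XX_def
      confA_def confB_def confZ_def confZZZ_def unitv_def unitv2_def fun_eq_iff)

lemma apply_Z_rxn: "\<alpha> \<in> Z_rxns \<Longrightarrow> fst \<alpha> \<le> d \<Longrightarrow> 1 \<le> apply_rxn \<alpha> d 4"
  by (auto simp: Z_rxns_def apply_rxn_def rxn_AZ_def rxn_BZ_def rxn_XX_def unitv_def unitv2_def)

lemma rxn_XX_applicable: "d \<in> {confA m, confB m, confZ m} \<Longrightarrow> rxn_XX \<in> app rxns d"
  by (auto simp: app_def fst_named_rxns_le_iff)

lemma apply_rxn_confAB:
  assumes "\<alpha> \<in> rxns" "\<alpha> \<notin> Z_rxns" "d \<in> {confA m, confB m}" "fst \<alpha> \<le> d"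
  shows "apply_rxn \<alpha> d \<in> {confA m, confB m}"
  using assms(1) by (cases rule: rxns_cases)
    (use assms in \<open>auto simp: Z_rxns_def fst_named_rxns_le_iff apply_named_rxns apply_rxn_void\<close>)

lemma apply_rxn_confABZ:
  assumes "\<alpha> \<in> rxns" "\<alpha> \<noteq> rxn_XX" "d \<in> {confA m, confB m, confZ m}" "fst \<alpha> \<le> d"
  shows "apply_rxn \<alpha> d \<in> {confA m, confB m, confZ m}"
  using assms(1) by (cases rule: rxns_cases)
    (use assms in \<open>auto simp: fst_named_rxns_le_iff apply_named_rxns apply_rxn_void\<close>)

lemma apply_rxn_confZZZ:
  assumes "\<alpha> \<in> rxns" "fst \<alpha> \<le> confZZZ m"
  shows "apply_rxn \<alpha> (confZZZ m) = confZZZ m"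
  using assms(1) by (cases rule: rxns_cases)
    (use assms in \<open>auto simp: fst_named_rxns_le_iff apply_rxn_void\<close>)

lemma Z_I_eq: "Z_I species Z_iface c0 = {c. is_config species c \<and> c0 \<in> range confA \<and> 1 \<le> c 4}"
  by (auto simp: Z_I_def Z_iface_def)

lemma interface_Z_iface: "interface species Z_iface"
  by (simp add: interface_def Z_iface_def)

lemma valid_init_iff: "valid_init species Z_iface c0 \<longleftrightarrow> c0 \<in> range confA"
proof -
  have "is_config species (unitv 4)"
    by (auto simp: is_config_def species_def supp_in_unitv norm1_unitv)
  moreover have "unitv 4 4 = 1" by (simp add: unitv_def)
  ultimately show ?thesis by (auto simp: valid_init_def Z_I_eq is_config_confs)
qed

lemma mem_stab_iff:
  assumes "c0 \<in> range confA" "is_config species c"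
  shows "c \<in> stab rxns (Z_I species Z_iface c0) \<longleftrightarrow> 1 \<le> c 4"
proof
  assume "1 \<le> c 4"
  then have "c' \<in> Z_I species Z_iface c0" if "reach rxns c c'" for c'
    using that reach_preserves_config[OF _ assms(2)] reach_Z_mono assms(1) by (fastforce simp: Z_I_eq)
  then show "c \<in> stab rxns (Z_I species Z_iface c0)"
    by (auto simp: stab_def reach_def)
qed (auto simp: stab_def Z_I_eq)

lemma stab_step_le:
  assumes "cs 0 \<in> range confA" "is_config species (cs t)" "1 \<le> cs t 4"
  shows "stab_step species rxns Z_iface cs \<le> t"
  unfolding stab_step_def by (rule Least_le) (use mem_stab_iff[OF assms(1,2)] assms(3) in simp)

lemma exec_token_or_Z:
  assumes exec: "is_exec species rxns cs as" and init: "cs 0 = confA m"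
  shows "cs t \<in> {confA m, confB m} \<or> 1 \<le> cs t 4"
proof (induction t)
  case (Suc t)
  have "as t \<in> rxns" "fst (as t) \<le> cs t" and next_conf: "cs (Suc t) = apply_rxn (as t) (cs t)"
    using exec by (auto simp: is_exec_def app_def)
  then show ?case
    using Suc rxns_keep_Z[of "as t" "cs t"] apply_Z_rxn[of "as t" "cs t"] apply_rxn_confAB[of "as t" "cs t" m]
    by (cases "as t \<in> Z_rxns") (auto simp: next_conf)
qed (simp add: init)

lemma stably_correct_rxns: "stably_correct species rxns Z_iface"
  unfolding stably_correct_def
proof (intro allI impI)
  fix cs as
  assume "is_exec species rxns cs as \<and> weakly_fair rxns cs as \<and> valid_init species Z_iface (cs 0)"
  then have exec: "is_exec species rxns cs as" and fair: "weakly_fair rxns cs as"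
    and valid: "cs 0 \<in> range confA" by (auto simp: valid_init_iff)
  then obtain m where init: "cs 0 = confA m" by auto
  have config: "is_config species (cs t)" for t using exec by (simp add: is_exec_def)
  show "\<exists>t. cs t \<in> stab rxns (Z_I species Z_iface (cs 0))"
  proof (rule ccontr)
    assume "\<nexists>t. cs t \<in> stab rxns (Z_I species Z_iface (cs 0))"
    then have no_Z: "\<not> 1 \<le> cs t 4" for t using mem_stab_iff[OF valid config] by auto
    then have token: "cs t \<in> {confA m, confB m}" for t using exec_token_or_Z[OF exec init] by blast
    text \<open>By weak fairness, the always applicable reaction 2X \<rightarrow> 2Z is eventually scheduled.\<close>
    obtain s where "as s = rxn_XX \<or> rxn_XX \<notin> app rxns (cs s)"
      using fair rxn_XX_applicable[of "cs 0" m] token[of 0] unfolding weakly_fair_def by blast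
    then have "as s = rxn_XX" using rxn_XX_applicable[of "cs s" m] token[of s] by auto
    moreover have "fst (as s) \<le> cs s" "cs (Suc s) = apply_rxn (as s) (cs s)"
      using exec by (auto simp: is_exec_def app_def)
    ultimately show False using apply_Z_rxn[of rxn_XX "cs s"] no_Z[of "Suc s"] by (simp add: Z_rxns_def)
  qed
qed

section \<open>Constant runtime with the policy Z_rxns\<close>

definition Z_policy :: "conf \<Rightarrow> rxn set" where
  "Z_policy c = (if c \<in> range confA \<union> range confB then Z_rxns else {})"

lemma runtime_policy_Z_policy: "runtime_policy species rxns Z_policy"
proof -
  have "fst \<alpha> \<noteq> snd \<alpha>" if "\<alpha> \<in> Z_rxns" for \<alpha>
    using that by (auto simp: Z_rxns_def rxn_AZ_def rxn_BZ_def rxn_XX_def)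
  moreover have "Z_rxns \<subseteq> rxns" by (simp add: Z_rxns_def)
  ultimately have "Z_rxns \<subseteq> NV rxns" by (auto simp: NV_def)
  then show ?thesis by (auto simp: runtime_policy_def Z_policy_def)
qed

lemma propensity_rxn_XX:
  assumes "0 < vol" "d 1 = 2"
  shows "0 < propensity rxns vol d rxn_XX" "propensity rxns vol d rxn_XX \<le> 1 / vol"
proof -
  have card: "1 \<le> card (Rr rxns (unitv2 1))"
    using card_Rr_bounds(1)[OF finite_rxns named_rxns_in_rxns(5)] by (simp add: fst_named_rxns)
  have "propensity rxns vol d rxn_XX = 1 / vol / real (card (Rr rxns (unitv2 1)))"
    using assms(2) by (simp add: rxn_XX_def propensity_unitv2 numeral_2_eq_2)
  moreover have "1 / vol / real (card (Rr rxns (unitv2 1))) \<le> 1 / vol / 1"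
    using card assms(1) by (intro frac_le) auto
  ultimately show "0 < propensity rxns vol d rxn_XX" "propensity rxns vol d rxn_XX \<le> 1 / vol"
    using card assms(1) by simp_all
qed

lemma prop_tot_pos_if_XX: "0 < vol \<Longrightarrow> d 1 = 2 \<Longrightarrow> 0 < prop_tot rxns vol d"
  using propensity_rxn_XX propensity_le_prop_tot[OF finite_rxns _ named_rxns_in_rxns(5)]
  by (meson less_imp_le order.strict_trans2)

lemma card_rxns_pos: "0 < card rxns"
  using named_rxns_in_rxns(1) finite_rxns card_gt_0_iff by blast

lemma set_propensity_Z_rxns_ge:
  assumes d: "d \<in> {confA m, confB m}" and vol: "0 \<le> vol"
  shows "1 / real (card rxns) \<le> set_propensity rxns vol Z_rxns d"
proof -
  obtain \<beta> where \<beta>: "\<beta> \<in> {rxn_AZ, rxn_BZ}" "1 / real (card rxns) \<le> propensity rxns vol d \<beta>"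
  proof (cases "d = confA m")
    case True
    then show ?thesis
      using propensity_unitv_ge[OF finite_rxns named_rxns_in_rxns(3)[unfolded rxn_AZ_def]] that[of rxn_AZ]
      by (simp add: rxn_AZ_def)
  next
    case False
    with d have "d = confB m" by simp
    then show ?thesis
      using propensity_unitv_ge[OF finite_rxns named_rxns_in_rxns(4)[unfolded rxn_BZ_def]] that[of rxn_BZ]
      by (simp add: rxn_BZ_def)
  qed
  moreover have "propensity rxns vol d \<beta> \<le> set_propensity rxns vol Z_rxns d"
    unfolding set_propensity_def using \<beta>(1) vol
    by (intro member_le_sum) (auto simp: Z_rxns_def intro: propensity_nonneg)
  ultimately show ?thesis by linarith
qed

lemma TC_Z_rxns_le_card:
  assumes vol: "0 < vol" and e: "e \<in> {confA m, confB m}"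
  shows "TC rxns vol Z_rxns e \<le> ennreal (real (card rxns))"
proof -
  interpret waiting_set rxns vol Z_rxns e "{confA m, confB m}"
  proof
    show "Z_rxns \<subseteq> rxns" by (simp add: Z_rxns_def)
    fix d assume d: "d \<in> {confA m, confB m}"
    then show "0 < prop_tot rxns vol d" using prop_tot_pos_if_XX[OF vol] by auto
    show "some_applicable rxns Z_rxns d"
      using rxn_XX_applicable[of d m] d by (auto simp: some_applicable_def Z_rxns_def)
    fix \<alpha> assume "\<alpha> \<in> rxns" "\<alpha> \<notin> Z_rxns" "fst \<alpha> \<le> d"
    then show "apply_rxn \<alpha> d \<in> {confA m, confB m}" using apply_rxn_confAB d by blast
  qed (use vol e in auto)
  have "TC rxns vol Z_rxns e \<le> ennreal (1 / (1 / real (card rxns)))"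
    using card_rxns_pos set_propensity_Z_rxns_ge vol by (intro TC_le_inverse_rate) auto
  then show ?thesis by simp
qed

lemma TC_Z_policy_le_card:
  assumes "0 < vol" "is_config species e"
  shows "TC rxns vol (Z_policy e) e \<le> ennreal (real (card rxns))"
proof (cases "e \<in> range confA \<union> range confB")
  case True
  then obtain m where "e \<in> {confA m, confB m}" by auto
  with assms(1) True show ?thesis by (simp add: Z_policy_def TC_Z_rxns_le_card)
next
  case False
  with assms show ?thesis by (simp add: Z_policy_def TC_empty_le_card[OF crn_rxns])
qed

lemma stab_step_le_tau_hit:
  assumes exec: "is_exec species rxns cs as" and init: "cs 0 = confA m"
    and hit: "tau_hit rxns Z_rxns cs as t s" and "0 < s"
  shows "stab_step species rxns Z_iface cs \<le> s"
proof -
  have config: "is_config species (cs u)" for u using exec by (simp add: is_exec_def)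
  have init': "cs 0 \<in> range confA" using init by simp
  consider (fired) "as (s - 1) \<in> Z_rxns" | (blocked) u where "u \<le> s" "\<forall>\<beta>\<in>Z_rxns. \<beta> \<notin> app rxns (cs u)"
    using hit by (auto simp: tau_hit_def)
  then show ?thesis
  proof cases
    case fired
    have "fst (as (s - 1)) \<le> cs (s - 1)" "cs (Suc (s - 1)) = apply_rxn (as (s - 1)) (cs (s - 1))"
      using exec by (auto simp: is_exec_def app_def)
    then have "1 \<le> cs s 4" using apply_Z_rxn[OF fired] \<open>0 < s\<close> by simp
    then show ?thesis using stab_step_le[OF init' config[of s]] by blast
  next
    case blocked
    then have "cs u \<notin> {confA m, confB m}" using rxn_XX_applicable[of "cs u" m] by (auto simp: Z_rxns_def)
    then have "1 \<le> cs u 4" using exec_token_or_Z[OF exec init] by blast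
    then show ?thesis using stab_step_le[OF init' config[of u]] blocked(1) by (meson order.trans)
  qed
qed

lemma stab_step_le_round_1:
  assumes exec: "is_exec species rxns cs as" and init: "cs 0 = confA m"
  shows "enat (stab_step species rxns Z_iface cs) \<le> round_t rxns Z_policy \<sigma> cs as 1"
proof (cases "tau rxns (Z_policy (cs (\<sigma> 0))) cs as (\<sigma> 0)")
  case (enat s)
  then have s: "\<sigma> 0 < s" "tau_hit rxns (Z_policy (cs (\<sigma> 0))) cs as (\<sigma> 0) s" by (auto dest: tau_eq_enatD)
  have "stab_step species rxns Z_iface cs \<le> s"
  proof (cases "1 \<le> cs (\<sigma> 0) 4")
    case True
    then show ?thesis
      using stab_step_le[of cs "\<sigma> 0"] init s(1) exec by (auto simp: is_exec_def)
  next
    case False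
    then have "Z_policy (cs (\<sigma> 0)) = Z_rxns"
      using exec_token_or_Z[OF exec init, of "\<sigma> 0"] by (auto simp: Z_policy_def)
    with s show ?thesis using stab_step_le_tau_hit[OF exec init] by simp
  qed
  with enat show ?thesis by (simp add: zero_enat_def)
qed (simp add: zero_enat_def)

lemma RT_exec_Z_policy_le_card:
  assumes "0 < \<phi> (norm1 species (cs 0))" "is_exec species rxns cs as" "cs 0 = confA m"
  shows "RT_exec species rxns Z_iface \<phi> Z_policy \<sigma> cs as \<le> ennreal (real (card rxns))"
proof -
  have "is_config species (cs (\<sigma> 0))" using assms(2) by (simp add: is_exec_def)
  then show ?thesis
    using RT_exec_le_TC_first_round[OF stab_step_le_round_1[OF assms(2,3)]]
      TC_Z_policy_le_card[OF assms(1)] by (blast intro: order.trans)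
qed

lemma RT_stab_le_card:
  assumes "\<And>n. 1 \<le> n \<Longrightarrow> 0 < \<phi> n"
  shows "RT_stab species rxns Z_iface \<phi> (\<lambda>_. True) n \<le> ennreal (real (card rxns))"
proof (rule RT_stab_le_if[OF runtime_policy_Z_policy])
  fix cs as \<sigma> assume "(cs, as, \<sigma>) \<in> runs species rxns Z_iface n"
  then have exec: "is_exec species rxns cs as" and "cs 0 \<in> range confA"
    by (auto simp: runs_def valid_init_iff)
  then obtain m where init: "cs 0 = confA m" by auto
  then have "0 < \<phi> (norm1 species (cs 0))" using assms by (simp add: norm1_confA)
  then show "RT_exec species rxns Z_iface \<phi> Z_policy \<sigma> cs as \<le> ennreal (real (card rxns))"
    using RT_exec_Z_policy_le_card exec init by blast
qed simp

section \<open>Linear runtime for policies restricted to escaping reactions\<close>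

lemma reach_confA_confB: "reach rxns (confA m) (confB m)" "reach rxns (confB m) (confA m)"
proof -
  have "step rxns (confA m) (confB m)"
    unfolding step_def by (rule bexI[of _ rxn_AB]) (auto simp: app_def fst_named_rxns_le_iff apply_named_rxns)
  moreover have "step rxns (confB m) (confA m)"
    unfolding step_def by (rule bexI[of _ rxn_BA]) (auto simp: app_def fst_named_rxns_le_iff apply_named_rxns)
  ultimately show "reach rxns (confA m) (confB m)" "reach rxns (confB m) (confA m)"
    unfolding reach_def by auto
qed

lemma escaping_confAB:
  assumes d: "d \<in> {confA m, confB m}"
  shows "escaping species rxns d \<subseteq> {rxn_XX}"
proof
  fix \<alpha> assume "\<alpha> \<in> escaping species rxns d"
  then have "\<alpha> \<in> rxns" and esc: "\<forall>c\<in>scc species rxns d. \<alpha> \<in> app rxns c \<and> apply_rxn \<alpha> c \<notin> scc species rxns d"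
    by (auto simp: escaping_def escapes_def)
  have "confA m \<in> scc species rxns d" "confB m \<in> scc species rxns d"
    using d reach_confA_confB[of m] is_config_confs unfolding scc_def reach_def by auto
  then have "fst \<alpha> \<le> confA m" "fst \<alpha> \<le> confB m" "apply_rxn \<alpha> (confA m) \<noteq> confA m"
    using esc by (auto simp: app_def)
  with \<open>\<alpha> \<in> rxns\<close> show "\<alpha> \<in> {rxn_XX}"
    by (cases rule: rxns_cases) (auto simp: fst_named_rxns_le_iff apply_rxn_void)
qed

lemma TC_rxn_XX_ge:
  assumes vol: "0 < vol" and e: "e \<in> {confA m, confB m}"
  shows "ennreal (vol / 2) \<le> TC rxns vol {rxn_XX} e"
proof -
  let ?W = "{confA m, confB m, confZ m}"
  interpret waiting_set rxns vol "{rxn_XX}" e ?W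
  proof
    fix d assume d: "d \<in> ?W"
    then show "0 < prop_tot rxns vol d" using prop_tot_pos_if_XX[OF vol] by auto
    show "some_applicable rxns {rxn_XX} d"
      using rxn_XX_applicable[OF d] by (simp add: some_applicable_def)
    fix \<alpha> assume "\<alpha> \<in> rxns" "\<alpha> \<notin> {rxn_XX}" "fst \<alpha> \<le> d"
    then show "apply_rxn \<alpha> d \<in> ?W" using apply_rxn_confABZ d by blast
  qed (use vol e in auto)
  have q: "set_propensity rxns vol {rxn_XX} d \<le> 1 / vol" if "d \<in> ?W" for d
    using propensity_rxn_XX[OF vol, of d] that by (auto simp: set_propensity_def)
  have pt: "prop_tot rxns vol d
      \<le> prop_tot rxns vol (confA m) + prop_tot rxns vol (confB m) + prop_tot rxns vol (confZ m)"
    if "d \<in> ?W" for d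
    using that vol prop_tot_nonneg[of vol rxns "confA m"] prop_tot_nonneg[of vol rxns "confB m"]
      prop_tot_nonneg[of vol rxns "confZ m"] by auto
  have "ennreal (1 / (2 * (1 / vol))) \<le> TC rxns vol {rxn_XX} e"
    using vol by (intro TC_ge_half_inverse_rate[OF _ q pt]) simp
  then show ?thesis by simp
qed

text \<open>L lists the reactions applicable in the terminal configuration confZZZ m; scheduling them
round-robin makes the execution weakly fair.\<close>

definition cycling_confs :: "nat \<Rightarrow> nat \<Rightarrow> nat \<Rightarrow> conf" where
  "cycling_confs K m t =
     (if t \<le> 2 * K then (if even t then confA m else confB m)
      else if t = Suc (2 * K) then confZ m else confZZZ m)"

definition cycling_rxns :: "nat \<Rightarrow> rxn list \<Rightarrow> nat \<Rightarrow> rxn" where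
  "cycling_rxns K L t =
     (if t < 2 * K then (if even t then rxn_AB else rxn_BA)
      else if t = 2 * K then rxn_AZ else if t = Suc (2 * K) then rxn_XX else L ! (t mod length L))"

lemma app_confZZZ_nonempty: "app rxns (confZZZ m) \<noteq> {}"
proof -
  have "unitv 4 \<in> reactant_vectors"
    by (auto simp: reactant_vectors_def species_def supp_in_unitv norm1_unitv)
  then have "(unitv 4, unitv 4) \<in> rxns" by (auto simp: rxns_def)
  then show ?thesis by (auto simp: app_def unitv_le_iff)
qed

lemma cycling_is_exec:
  assumes L: "set L = app rxns (confZZZ m)"
  shows "is_exec species rxns (cycling_confs K m) (cycling_rxns K L)"
  unfolding is_exec_def
proof (intro allI conjI)
  fix t
  show "is_config species (cycling_confs K m t)" by (simp add: cycling_confs_def is_config_confs)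
  have "L \<noteq> []" using L app_confZZZ_nonempty[of m] by (metis set_empty)
  then have "L ! (t mod length L) \<in> app rxns (confZZZ m)" using L by (metis nth_mem length_greater_0_conv mod_less_divisor)
  then have "cycling_rxns K L t \<in> app rxns (cycling_confs K m t)
      \<and> cycling_confs K m (Suc t) = apply_rxn (cycling_rxns K L t) (cycling_confs K m t)"
    using apply_rxn_confZZZ[of "L ! (t mod length L)" m]
    by (auto simp: cycling_rxns_def cycling_confs_def app_def fst_named_rxns_le_iff apply_named_rxns)
  then show "cycling_rxns K L t \<in> app rxns (cycling_confs K m t)"
    "cycling_confs K m (Suc t) = apply_rxn (cycling_rxns K L t) (cycling_confs K m t)" by auto
qed

lemma cycling_weakly_fair:
  assumes L: "set L = app rxns (confZZZ m)"
  shows "weakly_fair rxns (cycling_confs K m) (cycling_rxns K L)"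
  unfolding weakly_fair_def
proof (intro allI ballI)
  fix t \<alpha>
  define s0 where "s0 = t + 2 * K + 2"
  have terminal: "cycling_confs K m s = confZZZ m" if "s0 \<le> s" for s
    using that by (simp add: cycling_confs_def s0_def)
  show "\<exists>s\<ge>t. cycling_rxns K L s = \<alpha> \<or> \<alpha> \<notin> app rxns (cycling_confs K m s)"
  proof (cases "\<alpha> \<in> app rxns (confZZZ m)")
    case True
    then obtain j where j: "j < length L" "L ! j = \<alpha>" using L by (metis in_set_conv_nth)
    define s where "s = s0 * length L + j"
    have "s0 \<le> s0 * length L" using j(1) by (cases "length L") auto
    then have "s0 \<le> s" unfolding s_def by linarith
    moreover have "s mod length L = j" using j(1) by (simp add: s_def)
    ultimately have "cycling_rxns K L s = \<alpha>" using j by (simp add: cycling_rxns_def s0_def)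
    moreover have "t \<le> s" using \<open>s0 \<le> s\<close> by (simp add: s0_def)
    ultimately show ?thesis by blast
  next
    case False
    then show ?thesis using terminal[of s0] by (intro exI[of _ s0]) (auto simp: s0_def)
  qed
qed

lemma cycling_stab_step: "stab_step species rxns Z_iface (cycling_confs K m) = Suc (2 * K)"
proof -
  have "cycling_confs K m 0 \<in> range confA" by (simp add: cycling_confs_def)
  then have "cycling_confs K m t \<in> stab rxns (Z_I species Z_iface (cycling_confs K m 0)) \<longleftrightarrow> Suc (2 * K) \<le> t" for t
    using mem_stab_iff by (auto simp: cycling_confs_def is_config_confs)
  then show ?thesis unfolding stab_step_def by (intro Least_equality) auto
qed

lemma cycling_mem_runs:
  assumes "set L = app rxns (confZZZ m)" "skipping_policy \<sigma>"
  shows "(cycling_confs K m, cycling_rxns K L, \<sigma>) \<in> runs species rxns Z_iface (m + 3)"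
  using cycling_is_exec[OF assms(1)] cycling_weakly_fair[OF assms(1)] assms(2)
  by (simp add: runs_def valid_init_iff cycling_confs_def norm1_confA)

lemma RT_exec_cycling_ge_if_waiting:
  assumes "j \<le> 1" "\<rho> (cycling_confs 1 m j) = {rxn_XX}" "0 < \<phi> (m + 3)"
  shows "ennreal (\<phi> (m + 3) / 2)
    \<le> RT_exec species rxns Z_iface \<phi> \<rho> (\<lambda>t. t + j) (cycling_confs 1 m) (cycling_rxns 1 L)"
proof -
  let ?cs = "cycling_confs 1 m"
  have "?cs 0 = confA m" "?cs j \<in> {confA m, confB m}" using assms(1) by (auto simp: cycling_confs_def)
  then have "ennreal (\<phi> (m + 3) / 2) \<le> TC rxns (\<phi> (norm1 species (?cs 0))) (\<rho> (?cs j)) (?cs j)"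
    using TC_rxn_XX_ge[OF assms(3)] assms(2) by (simp add: norm1_confA)
  also have "\<dots> \<le> RT_exec species rxns Z_iface \<phi> \<rho> (\<lambda>t. t + j) ?cs (cycling_rxns 1 L)"
    using TC_first_round_le_RT_exec[of "\<lambda>t. t + j" species rxns Z_iface ?cs \<phi> \<rho> "cycling_rxns 1 L"]
    by (simp add: skipping_policy_def cycling_stab_step)
  finally show ?thesis .
qed

lemma RT_exec_cycling_ge_if_idle:
  assumes idle: "\<rho> (confA m) = {}" "\<rho> (confB m) = {}" and vol: "0 < \<phi> (m + 3)"
  defines "P \<equiv> prop_tot rxns (\<phi> (m + 3)) (confA m) + prop_tot rxns (\<phi> (m + 3)) (confB m)"
  shows "ennreal (real K / P) \<le> RT_exec species rxns Z_iface \<phi> \<rho> (\<lambda>t. t) (cycling_confs K m) (cycling_rxns K L)"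
proof -
  let ?cs = "cycling_confs K m"
  have token: "?cs i \<in> {confA m, confB m}" if "i \<le> 2 * K" for i
    using that by (simp add: cycling_confs_def)
  have prop_tot: "0 < prop_tot rxns (\<phi> (m + 3)) d" "prop_tot rxns (\<phi> (m + 3)) d \<le> P"
    if "d \<in> {confA m, confB m}" for d
    using that prop_tot_pos_if_XX[OF vol, of "confA m"] prop_tot_pos_if_XX[OF vol, of "confB m"]
    by (auto simp: P_def)
  have "0 < P" using prop_tot(1)[of "confA m"] prop_tot(1)[of "confB m"] by (simp add: P_def)
  then have "real K / P \<le> (\<Sum>i\<le>2 * K. 1 / P)" by (simp add: divide_right_mono)
  also have "\<dots> \<le> (\<Sum>i\<le>2 * K. 1 / prop_tot rxns (\<phi> (m + 3)) (?cs i))"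
    using token prop_tot by (intro sum_mono frac_le) auto
  finally have "ennreal (real K / P) \<le> (\<Sum>i\<le>2 * K. ennreal (1 / prop_tot rxns (\<phi> (m + 3)) (?cs i)))"
    using vol by (simp add: sum_ennreal prop_tot_nonneg ennreal_leI)
  also have "\<dots> = (\<Sum>i\<le>2 * K. TC rxns (\<phi> (norm1 species (?cs 0))) {} (?cs i))"
    using vol by (simp add: TC_empty cycling_confs_def norm1_confA)
  also have "\<dots> \<le> RT_exec species rxns Z_iface \<phi> \<rho> (\<lambda>t. t) ?cs (cycling_rxns K L)"
  proof (rule sum_TC_empty_le_RT_exec)
    show "\<rho> (?cs i) = {}" if "i \<le> 2 * K" for i using token[OF that] idle by auto
  qed (simp add: cycling_stab_step)
  finally show ?thesis .
qed

lemma escaping_policy_on_token: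
  assumes "\<And>d. is_config species d \<Longrightarrow> \<rho> d \<subseteq> escaping species rxns d"
  obtains j where "j \<le> 1" "\<rho> (cycling_confs 1 m j) = {rxn_XX}"
    | "\<rho> (confA m) = {}" "\<rho> (confB m) = {}"
proof -
  have "\<rho> (confA m) = {} \<or> \<rho> (confA m) = {rxn_XX}" "\<rho> (confB m) = {} \<or> \<rho> (confB m) = {rxn_XX}"
    using assms escaping_confAB is_config_confs by (blast dest: subset_singletonD)+
  moreover have "cycling_confs 1 m 0 = confA m" "cycling_confs 1 m 1 = confB m"
    by (simp_all add: cycling_confs_def)
  ultimately show thesis using that by fastforce
qed

lemma escaping_policy_slow_run:
  assumes a: "0 < a" and vol: "\<And>n. 1 \<le> n \<Longrightarrow> a * real n \<le> \<phi> n" and n: "3 \<le> n"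
    and escaping: "\<And>d. is_config species d \<Longrightarrow> \<rho> d \<subseteq> escaping species rxns d"
  shows "\<exists>cs as \<sigma>. (cs, as, \<sigma>) \<in> runs species rxns Z_iface n
    \<and> ennreal (a / 2 * real n) \<le> RT_exec species rxns Z_iface \<phi> \<rho> \<sigma> cs as"
proof -
  define m where "m = n - 3"
  have n_eq: "n = m + 3" using n by (simp add: m_def)
  have vol_ge: "a * real n \<le> \<phi> (m + 3)" using vol[of n] n unfolding n_eq[symmetric] by simp
  moreover have "0 < a * real n" using a n by simp
  ultimately have vol_pos: "0 < \<phi> (m + 3)" by linarith
  have "finite (app rxns (confZZZ m))" using finite_rxns by (rule rev_finite_subset) (auto simp: app_def)
  then obtain L where L: "set L = app rxns (confZZZ m)" using finite_list by blast
  from escaping consider j where "j \<le> 1" "\<rho> (cycling_confs 1 m j) = {rxn_XX}"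
    | "\<rho> (confA m) = {}" "\<rho> (confB m) = {}"
    by (rule escaping_policy_on_token)
  then show ?thesis
  proof cases
    case (1 j)
    have "ennreal (a / 2 * real n) \<le> ennreal (\<phi> (m + 3) / 2)" using vol_ge by (intro ennreal_leI) simp
    also have "\<dots> \<le> RT_exec species rxns Z_iface \<phi> \<rho> (\<lambda>t. t + j) (cycling_confs 1 m) (cycling_rxns 1 L)"
      using 1 vol_pos by (rule RT_exec_cycling_ge_if_waiting)
    finally show ?thesis
      using cycling_mem_runs[OF L, of "\<lambda>t. t + j"] n_eq by (auto simp: skipping_policy_def)
  next
    case 2
    define P where "P = prop_tot rxns (\<phi> (m + 3)) (confA m) + prop_tot rxns (\<phi> (m + 3)) (confB m)"
    have "0 < P" using prop_tot_pos_if_XX[OF vol_pos] by (simp add: P_def add_pos_pos)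
    define K where "K = nat \<lceil>a * real n * P\<rceil>"
    have "a * real n * P \<le> real K" unfolding K_def by linarith
    then have "a / 2 * real n \<le> real K / P" using \<open>0 < P\<close> a by (simp add: field_simps)
    also have "ennreal (real K / P)
        \<le> RT_exec species rxns Z_iface \<phi> \<rho> (\<lambda>t. t) (cycling_confs K m) (cycling_rxns K L)"
      unfolding P_def by (rule RT_exec_cycling_ge_if_idle[where \<phi> = \<phi>, OF 2 vol_pos])
    finally show ?thesis
      using cycling_mem_runs[OF L, of "\<lambda>t. t"] n_eq by (auto simp: skipping_policy_def ennreal_leI)
  qed
qed

lemma RT_stab_escaping_ge:
  assumes "0 < a" "\<And>n. 1 \<le> n \<Longrightarrow> a * real n \<le> \<phi> n" "3 \<le> n"
  shows "ennreal (a / 2 * real n)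
    \<le> RT_stab species rxns Z_iface \<phi> (\<lambda>\<rho>. \<forall>d. is_config species d \<longrightarrow> \<rho> d \<subseteq> escaping species rxns d) n"
  by (rule RT_stab_ge_if) (use escaping_policy_slow_run[OF assms] in blast)

lemma RT_stab_le_card_ln:
  assumes "\<And>n. 1 \<le> n \<Longrightarrow> 0 < \<phi> n" "3 \<le> n"
  shows "RT_stab species rxns Z_iface \<phi> (\<lambda>_. True) n \<le> ennreal (real (card rxns) * ln (real n))"
proof -
  have "1 \<le> ln (real n)" using exp_le assms(2) by (simp add: ln_ge_iff)
  then have "ennreal (real (card rxns)) \<le> ennreal (real (card rxns) * ln (real n))"
    by (intro ennreal_leI) (simp add: mult_le_cancel_left1)
  with RT_stab_le_card[OF assms(1)] show ?thesis by (rule order.trans)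
qed

theorem proposition7p3:
  shows "\<exists>S R I. crn S R \<and> interface S I \<and> stably_correct S R I \<and>
    (\<forall>\<phi>. volume_fun \<phi> \<longrightarrow>
       (\<exists>C N. \<forall>n \<ge> N. RT_stab S R I \<phi> (\<lambda>_. True) n \<le> ennreal (C * ln (real n)))
     \<and> (\<exists>c N. 0 < c \<and> (\<forall>n \<ge> N. ennreal (c * real n)
            \<le> RT_stab S R I \<phi> (\<lambda>\<rho>. \<forall>d. is_config S d \<longrightarrow> \<rho> d \<subseteq> escaping S R d) n)))"
proof (intro exI[of _ species] exI[of _ rxns] exI[of _ Z_iface] conjI allI impI)
  show "crn species rxns" by (rule crn_rxns)
  show "interface species Z_iface" by (rule interface_Z_iface)
  show "stably_correct species rxns Z_iface" by (rule stably_correct_rxns)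
  fix \<phi> assume "volume_fun \<phi>"
  then obtain a where a: "0 < a" and vol: "\<And>n. 1 \<le> n \<Longrightarrow> a * real n \<le> \<phi> n"
    unfolding volume_fun_def by blast
  have vol_pos: "0 < \<phi> n" if "1 \<le> n" for n
  proof -
    have "0 < a * real n" using a that by simp
    with vol[OF that] show ?thesis by linarith
  qed
  show "\<exists>C N. \<forall>n \<ge> N. RT_stab species rxns Z_iface \<phi> (\<lambda>_. True) n \<le> ennreal (C * ln (real n))"
    using RT_stab_le_card_ln[OF vol_pos] by (intro exI[of _ "real (card rxns)"] exI[of _ 3]) auto
  show "\<exists>c N. 0 < c \<and> (\<forall>n \<ge> N. ennreal (c * real n)
      \<le> RT_stab species rxns Z_iface \<phi> (\<lambda>\<rho>. \<forall>d. is_config species d \<longrightarrow> \<rho> d \<subseteq> escaping species rxns d) n)"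
    using RT_stab_escaping_ge[OF a vol] a by (intro exI[of _ "a / 2"] exI[of _ 3]) auto
qed

end
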